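(* Let $U,V\in\mathcal{L}_2(\mathbb{R}^m)$, $Y:=(U,V)$, and let $S$ be the standard form on $\mathbb{R}^{2m}$. (a) If the convex hull of the support of $\mathrm{Law}(U)$ is $\mathbb{R}^m$, then $\{u:(u,v)\in G\text{ for some }v\}=\mathbb{R}^m$ for every optimal set $G$ of the dual problem. (b) If $V$ is bounded, then there exists an optimal set $G$ of the dual problem such that $\{u:(u,v)\in G\text{ for some }v\}=\mathbb{R}^m$.
   Context: Standard form on $\mathbb{R}^{2m}$: $S((r,s),(u,v)):=\langle s,u\rangle+\langle r,v\rangle$. $G$ is $S$-monotone if $S(x-y,x-y)\ge0$ for $x,y\in G$; maximal if not a strict subset of another $S$-monotone set; $\mathcal{M}(S)$ = family of maximal $S$-monotone sets. $\psi_G(y):=\sup_{x\in G}(S(x,y)-\frac12S(x,x))$. An optimal set of the dual problem is a minimizer of $\mathbb{E}[\psi_G(Y)]$ over $G\in\mathcal{M}(S)$ (such minimizers exist). *)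

theory Defs
  imports "HOL-Probability.Probability"
begin

definition Sform :: "('a::euclidean_space \<times> 'a) \<Rightarrow> ('a \<times> 'a) \<Rightarrow> real" where
  "Sform x y = inner (snd x) (fst y) + inner (fst x) (snd y)"

definition S_monotone :: "('a::euclidean_space \<times> 'a) set \<Rightarrow> bool" where
  "S_monotone G \<longleftrightarrow> (\<forall>x\<in>G. \<forall>y\<in>G. Sform (x - y) (x - y) \<ge> 0)"

definition maximal_S_monotone :: "('a::euclidean_space \<times> 'a) set \<Rightarrow> bool" where
  "maximal_S_monotone G \<longleftrightarrow> S_monotone G \<and> \<not> (\<exists>H. S_monotone H \<and> G \<subset> H)"

definition psi :: "('a::euclidean_space \<times> 'a) set \<Rightarrow> ('a \<times> 'a) \<Rightarrow> ereal" where
  "psi G y = (SUP x\<in>G. ereal (Sform x y - Sform x x / 2))"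

definition eexpectation :: "'s measure \<Rightarrow> ('s \<Rightarrow> ereal) \<Rightarrow> ereal" where
  "eexpectation M f =
     enn2ereal (\<integral>\<^sup>+ w. e2ennreal (f w) \<partial>M) - enn2ereal (\<integral>\<^sup>+ w. e2ennreal (- f w) \<partial>M)"

definition dual_optimal :: "'s measure \<Rightarrow> ('s \<Rightarrow> 'a::euclidean_space) \<Rightarrow> ('s \<Rightarrow> 'a) \<Rightarrow> ('a \<times> 'a) set \<Rightarrow> bool" where
  "dual_optimal M U V G \<longleftrightarrow> maximal_S_monotone G \<and>
     (\<forall>H. maximal_S_monotone H \<longrightarrow>
        eexpectation M (\<lambda>w. psi G (U w, V w)) \<le> eexpectation M (\<lambda>w. psi H (U w, V w)))"

text \<open>Support of the law of U: smallest closed set of full measure.\<close>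
definition law_support :: "'s measure \<Rightarrow> ('s \<Rightarrow> 'a::euclidean_space) \<Rightarrow> 'a set" where
  "law_support M U = {x. \<forall>e>0. emeasure (distr M borel U) (ball x e) > 0}"

end

theory Submission
  imports Defs "HOL-Library.Diagonal_Subsequence"
begin

text \<open>Since \<open>S(x - y, x - y) = 2 \<langle>r - r', s - s'\<rangle>\<close> for \<open>x = (r, s)\<close>, \<open>y = (r', s')\<close>, the \<open>S\<close>-monotone
  sets are the graphs of monotone relations on \<open>\<real>\<^sup>m\<close> and \<open>psi G\<close> is their Fitzpatrick function.

  (a) For an optimal \<open>G\<close>, \<open>E psi G (U, V) \<le> E psi Id (U, V) < \<infinity>\<close>, so for almost every value \<open>u\<close>
  of \<open>U\<close> the function \<open>psi G (u, \<cdot>)\<close> is finite somewhere. These \<open>u\<close> form a convex set whose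
  closure contains the support of \<open>U\<close>, hence they are all of \<open>\<real>\<^sup>m\<close>; finiteness of
  \<open>psi G (u, \<cdot>)\<close> for all \<open>u\<close> bounds the resolvent values of \<open>G\<close> over every point, and a limit of
  them lies in \<open>G\<close>.

  (b) By Fitzpatrick's inequality the dual objective is the expected gap
  \<open>E (psi G (U, V) - \<langle>U, V\<rangle>) \<ge> 0\<close> plus a constant. Along a minimising sequence the resolvents
  \<open>(I + G)\<^sup>-\<^sup>1\<close> (Minty's theorem) are nonexpansive and bounded at \<open>0\<close>, so a subsequence converges
  pointwise to the resolvent of a maximal monotone set, which is optimal by Fatou's lemma. Cutting
  the values of an optimal set at a norm \<open>R\<close> beyond the bound of \<open>V\<close> keeps it maximal monotone,
  gives it full domain and does not increase \<open>psi\<close> at \<open>(U, V)\<close>, so it stays optimal.\<close>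

section \<open>Monotone sets\<close>

lemma Sform_self: "Sform x x = 2 * inner (fst x) (snd x)"
  unfolding Sform_def by (simp add: inner_commute)

lemma S_monotone_iff:
  "S_monotone G \<longleftrightarrow> (\<forall>x\<in>G. \<forall>y\<in>G. 0 \<le> inner (fst x - fst y) (snd x - snd y))"
  unfolding S_monotone_def Sform_self by simp

lemma S_monotoneD:
  "S_monotone G \<Longrightarrow> x \<in> G \<Longrightarrow> y \<in> G \<Longrightarrow> 0 \<le> inner (fst x - fst y) (snd x - snd y)"
  unfolding S_monotone_iff by blast

lemma maximal_S_monotone_imp_S_monotone: "maximal_S_monotone G \<Longrightarrow> S_monotone G"
  unfolding maximal_S_monotone_def by blast

lemma maximal_S_monotone_memI:
  assumes "maximal_S_monotone G" and "\<And>x. x \<in> G \<Longrightarrow> 0 \<le> inner (fst x - u) (snd x - v)"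
  shows "(u, v) \<in> G"
proof (rule ccontr)
  assume "(u, v) \<notin> G"
  then have "G \<subset> insert (u, v) G" by auto
  moreover have "S_monotone (insert (u, v) G)"
    unfolding S_monotone_iff
  proof (intro ballI)
    fix x y assume x: "x \<in> insert (u, v) G" and y: "y \<in> insert (u, v) G"
    have "inner (a - b) (c - d) = inner (b - a) (d - c)" for a b c d :: 'a
      by (metis inner_minus_left inner_minus_right minus_diff_eq)
    then have "0 \<le> inner (u - fst z) (v - snd z)" if "z \<in> G" for z
      using assms(2)[OF that] by metis
    then show "0 \<le> inner (fst x - fst y) (snd x - snd y)"
      using x y assms(2) S_monotoneD[OF maximal_S_monotone_imp_S_monotone[OF assms(1)]] by auto
  qed
  ultimately show False
    using assms(1) unfolding maximal_S_monotone_def by blast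
qed

lemma maximal_S_monotoneI:
  assumes "S_monotone G"
    and "\<And>u v. (\<And>x. x \<in> G \<Longrightarrow> 0 \<le> inner (fst x - u) (snd x - v)) \<Longrightarrow> (u, v) \<in> G"
  shows "maximal_S_monotone G"
  unfolding maximal_S_monotone_def
proof (intro conjI assms(1) notI)
  assume "\<exists>H. S_monotone H \<and> G \<subset> H"
  then obtain H y where H: "S_monotone H" "G \<subseteq> H" "y \<in> H" "y \<notin> G" by blast
  have "(fst y, snd y) \<in> G"
    by (rule assms(2)) (use H in \<open>auto simp: S_monotone_iff\<close>)
  then show False using H by simp
qed

lemma maximal_S_monotone_nonempty:
  assumes "maximal_S_monotone G" shows "G \<noteq> {}"
proof
  assume "G = {}"
  moreover have "S_monotone {(0, 0)}" unfolding S_monotone_iff by simp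
  ultimately show False using assms unfolding maximal_S_monotone_def by blast
qed

lemma S_monotone_scaled_inj:
  assumes "S_monotone G" "0 < \<epsilon>" "x \<in> G" "x' \<in> G"
    and "fst x + \<epsilon> *\<^sub>R snd x = fst x' + \<epsilon> *\<^sub>R snd x'"
  shows "x = x'"
proof -
  have d: "fst x - fst x' = - \<epsilon> *\<^sub>R (snd x - snd x')"
    using assms(5) by (simp add: algebra_simps)
  have "0 \<le> inner (fst x - fst x') (snd x - snd x')"
    using S_monotoneD[OF assms(1,3,4)] .
  then have "inner (snd x - snd x') (snd x - snd x') \<le> 0"
    unfolding d using \<open>0 < \<epsilon>\<close> by (simp add: mult_le_0_iff)
  then have "snd x = snd x'"
    by (metis inner_gt_zero_iff linorder_not_le right_minus_eq)
  then show ?thesis using d by (simp add: prod_eq_iff)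
qed

section \<open>Kirszbraun's extension for finitely many points\<close>

lemma pairwise_weighted_norm_diff_sq:
  fixes a :: "'b \<Rightarrow> 'a::real_inner"
  shows "(\<Sum>i\<in>F. \<Sum>j\<in>F. u i * u j * (norm (a i - a j))\<^sup>2)
       = 2 * sum u F * (\<Sum>i\<in>F. u i * (norm (a i))\<^sup>2) - 2 * (norm (\<Sum>i\<in>F. u i *\<^sub>R a i))\<^sup>2"
proof -
  have e: "(norm (x - y))\<^sup>2 = (norm x)\<^sup>2 + (norm y)\<^sup>2 - 2 * inner x y" for x y :: 'a
    by (simp add: power2_norm_eq_inner inner_diff_left inner_diff_right inner_commute)
  let ?s = "\<lambda>i. u i * (norm (a i))\<^sup>2"
  have "(\<Sum>i\<in>F. \<Sum>j\<in>F. u i * u j * (norm (a i - a j))\<^sup>2)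
      = (\<Sum>i\<in>F. \<Sum>j\<in>F. u j * ?s i + u i * ?s j - 2 * inner (u i *\<^sub>R a i) (u j *\<^sub>R a j))"
    by (simp add: e algebra_simps)
  also have "\<dots> = 2 * sum u F * sum ?s F
      - 2 * (\<Sum>i\<in>F. \<Sum>j\<in>F. inner (u i *\<^sub>R a i) (u j *\<^sub>R a j))"
  proof -
    have 1: "(\<Sum>i\<in>F. \<Sum>j\<in>F. u j * ?s i) = sum u F * sum ?s F"
      by (simp add: sum_distrib_right[symmetric] sum_distrib_left mult.commute)
    have 2: "(\<Sum>i\<in>F. \<Sum>j\<in>F. u i * ?s j) = sum u F * sum ?s F"
      by (simp add: sum_distrib_left[symmetric] sum_distrib_right)
    show ?thesis using 2
      by (simp add: sum_subtractf sum.distrib 1 sum_distrib_left[symmetric])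
  qed
  also have "(\<Sum>i\<in>F. \<Sum>j\<in>F. inner (u i *\<^sub>R a i) (u j *\<^sub>R a j)) = (norm (\<Sum>i\<in>F. u i *\<^sub>R a i))\<^sup>2"
    by (simp add: power2_norm_eq_inner inner_sum_left inner_sum_right sum_distrib_left
        inner_commute mult.left_commute)
  finally show ?thesis .
qed

lemma weighted_variance_le:
  fixes a b :: "'b \<Rightarrow> 'a::real_inner"
  assumes "\<And>i. i \<in> F \<Longrightarrow> 0 \<le> u i" "sum u F = 1"
    and "\<And>i j. i \<in> F \<Longrightarrow> j \<in> F \<Longrightarrow> norm (a i - a j) \<le> norm (b i - b j)"
  shows "(\<Sum>i\<in>F. u i * (norm (a i))\<^sup>2) - (norm (\<Sum>i\<in>F. u i *\<^sub>R a i))\<^sup>2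
       \<le> (\<Sum>i\<in>F. u i * (norm (b i))\<^sup>2)"
proof -
  have "(\<Sum>i\<in>F. \<Sum>j\<in>F. u i * u j * (norm (a i - a j))\<^sup>2)
      \<le> (\<Sum>i\<in>F. \<Sum>j\<in>F. u i * u j * (norm (b i - b j))\<^sup>2)"
    by (intro sum_mono mult_left_mono power_mono) (auto simp: assms)
  then show ?thesis
    unfolding pairwise_weighted_norm_diff_sq assms(2)
    using zero_le_power2[of "norm (\<Sum>i\<in>F. u i *\<^sub>R b i)"] by linarith
qed

lemma nonpos_if_linear_le_quadratic:
  fixes D N :: real
  assumes "\<And>t. 0 < t \<Longrightarrow> t \<le> 1 \<Longrightarrow> t * D \<le> t\<^sup>2 * N"
  shows "D \<le> 0"
proof (rule ccontr)
  assume "\<not> D \<le> 0"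
  then have "0 < D" "D \<le> N" using assms[of 1] by auto
  define t where "t = D / (N + D)"
  have "0 < t" "t \<le> 1" using \<open>0 < D\<close> \<open>D \<le> N\<close> by (auto simp: t_def)
  then have "D \<le> t * N"
    using assms[of t] by (simp add: power2_eq_square)
  moreover have "t * N < D"
    using \<open>0 < D\<close> \<open>D \<le> N\<close> by (simp add: t_def field_simps)
  ultimately show False by simp
qed

text \<open>The points are lifted to \<open>(a, b, |a|\<^sup>2 - |b|\<^sup>2)\<close>; on their convex hull the concave function
  \<open>(q, b, A) \<mapsto> A - |q|\<^sup>2\<close> is nonpositive by the variance comparison above, and the first-order
  condition at its maximiser \<open>(q, b, A)\<close> says that \<open>q\<close> is the required point.\<close>

lemma lifted_hull_nonpos:
  fixes F :: "('a::real_inner \<times> 'a \<times> real) set"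
  assumes "finite F"
    and "\<And>x. x \<in> F \<Longrightarrow> snd (snd x) = (norm (fst x))\<^sup>2 - (norm (fst (snd x)))\<^sup>2"
    and "\<And>x x'. x \<in> F \<Longrightarrow> x' \<in> F \<Longrightarrow> norm (fst x - fst x') \<le> norm (fst (snd x) - fst (snd x'))"
    and "w \<in> convex hull F"
  shows "snd (snd w) \<le> (norm (fst w))\<^sup>2"
proof -
  obtain u where u: "\<forall>x\<in>F. 0 \<le> u x" "sum u F = 1" "(\<Sum>x\<in>F. u x *\<^sub>R x) = w"
    using assms(4) \<open>finite F\<close> by (auto simp: convex_hull_finite)
  have fw: "fst w = (\<Sum>x\<in>F. u x *\<^sub>R fst x)" and sw: "snd (snd w) = (\<Sum>x\<in>F. u x * snd (snd x))"
    unfolding u(3)[symmetric] by (simp_all add: fst_sum snd_sum)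
  have "(\<Sum>x\<in>F. u x * snd (snd x))
      = (\<Sum>x\<in>F. u x * (norm (fst x))\<^sup>2) - (\<Sum>x\<in>F. u x * (norm (fst (snd x)))\<^sup>2)"
    unfolding sum_subtractf[symmetric] by (rule sum.cong) (simp_all add: assms(2) right_diff_distrib)
  moreover have "(\<Sum>x\<in>F. u x * (norm (fst x))\<^sup>2) - (norm (\<Sum>x\<in>F. u x *\<^sub>R fst x))\<^sup>2
      \<le> (\<Sum>x\<in>F. u x * (norm (fst (snd x)))\<^sup>2)"
    by (rule weighted_variance_le) (use u assms(3) in auto)
  ultimately show ?thesis unfolding fw sw by linarith
qed

lemma lifted_max_first_order:
  fixes W :: "('a::real_inner \<times> 'b::real_vector \<times> real) set"
  assumes "convex W" "w \<in> W" "p \<in> W"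
    and "\<And>w'. w' \<in> W \<Longrightarrow> snd (snd w') - (norm (fst w'))\<^sup>2 \<le> snd (snd w) - (norm (fst w))\<^sup>2"
  shows "snd (snd p) - snd (snd w) \<le> 2 * inner (fst w) (fst p - fst w)"
proof -
  define D where "D = snd (snd p) - snd (snd w) - 2 * inner (fst w) (fst p - fst w)"
  define N where "N = (norm (fst p - fst w))\<^sup>2"
  have "t * D \<le> t\<^sup>2 * N" if "0 < t" "t \<le> 1" for t
  proof -
    have "w + t *\<^sub>R (p - w) \<in> W"
      using convexD_alt[OF assms(1-3), of t] that by (simp add: algebra_simps)
    then have le: "snd (snd (w + t *\<^sub>R (p - w))) - (norm (fst (w + t *\<^sub>R (p - w))))\<^sup>2
        \<le> snd (snd w) - (norm (fst w))\<^sup>2"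
      by (rule assms(4))
    have comp: "fst (w + t *\<^sub>R (p - w)) = fst w + t *\<^sub>R (fst p - fst w)"
      "snd (snd (w + t *\<^sub>R (p - w))) = snd (snd w) + t * (snd (snd p) - snd (snd w))"
      by (simp_all add: algebra_simps)
    have nq: "(norm (fst w + t *\<^sub>R (fst p - fst w)))\<^sup>2
        = (norm (fst w))\<^sup>2 + 2 * t * inner (fst w) (fst p - fst w) + t\<^sup>2 * N"
      unfolding N_def power2_norm_eq_inner
      by (simp add: inner_add_left inner_add_right inner_commute power2_eq_square algebra_simps)
    have "snd (snd (w + t *\<^sub>R (p - w))) - (norm (fst (w + t *\<^sub>R (p - w))))\<^sup>2
        = snd (snd w) - (norm (fst w))\<^sup>2 + t * D - t\<^sup>2 * N"
      unfolding comp nq by (simp add: D_def algebra_simps)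
    then show ?thesis using le by simp
  qed
  then have "D \<le> 0" by (rule nonpos_if_linear_le_quadratic)
  then show ?thesis by (simp add: D_def)
qed

lemma kirszbraun_finite:
  fixes E :: "('a::euclidean_space \<times> 'a) set"
  assumes "finite E" "E \<noteq> {}"
    and "\<And>e e'. e \<in> E \<Longrightarrow> e' \<in> E \<Longrightarrow> norm (fst e - fst e') \<le> norm (snd e - snd e')"
  shows "\<exists>q. \<forall>e\<in>E. norm (q - fst e) \<le> norm (snd e)"
proof -
  define \<phi> where "\<phi> e = (fst e, snd e, (norm (fst e))\<^sup>2 - (norm (snd e))\<^sup>2)" for e :: "'a \<times> 'a"
  define W where "W = convex hull (\<phi> ` E)"
  define \<gamma> where "\<gamma> w = snd (snd w) - (norm (fst w))\<^sup>2" for w :: "'a \<times> 'a \<times> real"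
  have "compact W"
    unfolding W_def by (intro compact_convex_hull finite_imp_compact finite_imageI assms(1))
  moreover have "W \<noteq> {}" using assms(2) by (simp add: W_def)
  moreover have "continuous_on W \<gamma>" unfolding \<gamma>_def by (intro continuous_intros)
  ultimately obtain w where w: "w \<in> W" "\<And>w'. w' \<in> W \<Longrightarrow> \<gamma> w' \<le> \<gamma> w"
    by (blast dest: continuous_attains_sup)
  have "snd (snd w) \<le> (norm (fst w))\<^sup>2"
  proof (rule lifted_hull_nonpos)
    show "finite (\<phi> ` E)" using assms(1) by simp
    show "w \<in> convex hull (\<phi> ` E)" using w(1) by (simp add: W_def)
  qed (use assms(3) in \<open>auto simp: \<phi>_def\<close>)
  have "norm (fst w - fst e) \<le> norm (snd e)" if "e \<in> E" for e
  proof -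
    have "\<phi> e \<in> W" using \<open>e \<in> E\<close> by (simp add: W_def hull_inc)
    from lifted_max_first_order[OF convex_convex_hull[of "\<phi> ` E", folded W_def] w(1) this
        w(2)[unfolded \<gamma>_def]]
    have "(norm (fst e))\<^sup>2 - (norm (snd e))\<^sup>2 - snd (snd w) \<le> 2 * inner (fst w) (fst e - fst w)"
      by (simp add: \<phi>_def)
    moreover have "(norm (fst w - fst e))\<^sup>2 = (norm (fst w))\<^sup>2 - 2 * inner (fst w) (fst e) + (norm (fst e))\<^sup>2"
      by (simp add: power2_norm_eq_inner inner_diff_left inner_diff_right inner_commute)
    moreover have "inner (fst w) (fst e - fst w) = inner (fst w) (fst e) - (norm (fst w))\<^sup>2"
      by (simp add: inner_diff_right power2_norm_eq_inner)
    ultimately have "(norm (fst w - fst e))\<^sup>2 \<le> (norm (snd e))\<^sup>2"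
      using \<open>snd (snd w) \<le> (norm (fst w))\<^sup>2\<close> by linarith
    then show ?thesis by (rule power2_le_imp_le) simp
  qed
  then show ?thesis by blast
qed

section \<open>Minty's theorem and resolvents\<close>

lemma inner_nonneg_iff_norm_diff_le:
  fixes a b :: "'a::real_inner"
  shows "0 \<le> inner a b \<longleftrightarrow> norm (a - b) \<le> norm (a + b)"
proof -
  have "(norm (a + b))\<^sup>2 - (norm (a - b))\<^sup>2 = 4 * inner a b"
    unfolding power2_norm_eq_inner
    by (simp add: inner_add_left inner_add_right inner_diff_left inner_diff_right inner_commute)
  moreover have "norm (a - b) \<le> norm (a + b) \<longleftrightarrow> (norm (a - b))\<^sup>2 \<le> (norm (a + b))\<^sup>2"
    using abs_le_square_iff[of "norm (a - b)" "norm (a + b)"] by simp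
  ultimately show ?thesis by linarith
qed

lemma norm_Pair_le_norm_add:
  fixes a b :: "'a::real_inner"
  assumes "0 \<le> inner a b"
  shows "norm (a, b) \<le> norm (a + b)"
proof -
  have "(norm a)\<^sup>2 + (norm b)\<^sup>2 \<le> (norm (a + b))\<^sup>2"
    using assms unfolding power2_norm_eq_inner
    by (simp add: inner_add_left inner_add_right inner_commute)
  then show ?thesis unfolding norm_Pair by (intro real_le_lsqrt) simp_all
qed

text \<open>On a monotone graph the map \<open>r + s - z \<mapsto> r - s\<close> is nonexpansive, so finitely many of these
  closed balls meet by Kirszbraun's extension; by compactness all of them do.\<close>

lemma kirszbraun_monotone_graph:
  assumes "S_monotone G" and "G \<noteq> {}"
  shows "\<exists>q. \<forall>x\<in>G. norm ((fst x - snd x) - q) \<le> norm ((fst x + snd x) - z)"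
proof -
  define K where "K x = cball (fst x - snd x) (norm (fst x + snd x - z))" for x :: "'a \<times> 'a"
  obtain x0 where "x0 \<in> G" using assms(2) by blast
  have "K x0 \<inter> (\<Inter>x\<in>G. K x) \<noteq> {}"
  proof (rule compact_imp_fip_image)
    show "compact (K x0)" "\<And>x. closed (K x)" by (simp_all add: K_def)
    fix I assume I: "finite I" "I \<subseteq> G"
    define E where "E = (\<lambda>x. (fst x - snd x, fst x + snd x - z)) ` insert x0 I"
    have "finite E" "E \<noteq> {}" using I by (simp_all add: E_def)
    moreover have "norm (fst e - fst e') \<le> norm (snd e - snd e')" if ee: "e \<in> E" "e' \<in> E" for e e'
    proof -
      obtain x x' where x: "x \<in> G" "x' \<in> G"
        and e: "e = (fst x - snd x, fst x + snd x - z)" "e' = (fst x' - snd x', fst x' + snd x' - z)"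
        using ee I \<open>x0 \<in> G\<close> unfolding E_def by blast
      have "0 \<le> inner (fst x - fst x') (snd x - snd x')"
        using S_monotoneD[OF assms(1) x] .
      then show ?thesis
        unfolding inner_nonneg_iff_norm_diff_le e by (simp add: algebra_simps)
    qed
    ultimately have "\<exists>q. \<forall>e\<in>E. norm (q - fst e) \<le> norm (snd e)"
      by (rule kirszbraun_finite)
    then obtain q where q: "\<And>e. e \<in> E \<Longrightarrow> norm (q - fst e) \<le> norm (snd e)" by blast
    have "q \<in> K x" if "x \<in> insert x0 I" for x
      using q[of "(fst x - snd x, fst x + snd x - z)"] that
      unfolding K_def E_def by (auto simp: dist_norm norm_minus_commute)
    then show "K x0 \<inter> (\<Inter>x\<in>I. K x) \<noteq> {}" by blast
  qed
  then obtain q where "q \<in> K x0 \<inter> (\<Inter>x\<in>G. K x)" by blast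
  then have "norm ((fst x - snd x) - q) \<le> norm ((fst x + snd x) - z)" if "x \<in> G" for x
    using that by (auto simp: K_def dist_norm)
  then show ?thesis by blast
qed

theorem minty_surj:
  assumes "maximal_S_monotone G"
  obtains x where "x \<in> G" "fst x + snd x = z"
proof -
  obtain q where q: "\<And>x. x \<in> G \<Longrightarrow> norm ((fst x - snd x) - q) \<le> norm ((fst x + snd x) - z)"
    using kirszbraun_monotone_graph[OF maximal_S_monotone_imp_S_monotone[OF assms]
        maximal_S_monotone_nonempty[OF assms]] by blast
  define u where "u = (z + q) /\<^sub>R 2"
  define v where "v = (z - q) /\<^sub>R 2"
  have "u + v = ((z + q) + (z - q)) /\<^sub>R 2" "u - v = ((z + q) - (z - q)) /\<^sub>R 2"
    unfolding u_def v_def by (simp_all only: scaleR_add_right scaleR_diff_right)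
  moreover have "(z + q) + (z - q) = 2 *\<^sub>R z" "(z + q) - (z - q) = 2 *\<^sub>R q"
    by (simp_all add: scaleR_2)
  ultimately have uv: "u + v = z" "u - v = q" by simp_all
  have "(u, v) \<in> G"
  proof (rule maximal_S_monotone_memI[OF assms])
    fix x assume "x \<in> G"
    have "norm ((fst x - snd x) - (u - v)) \<le> norm ((fst x + snd x) - (u + v))"
      using q[OF \<open>x \<in> G\<close>] unfolding uv .
    moreover have "(fst x - u) - (snd x - v) = (fst x - snd x) - (u - v)"
      and "(fst x - u) + (snd x - v) = (fst x + snd x) - (u + v)"
      by (simp_all add: algebra_simps)
    ultimately show "0 \<le> inner (fst x - u) (snd x - v)"
      unfolding inner_nonneg_iff_norm_diff_le by metis
  qed
  then show ?thesis using uv(1) by (intro that[of "(u, v)"]) simp_all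
qed

corollary minty_surj_scaled:
  assumes "maximal_S_monotone G" and "0 < \<epsilon>"
  obtains x where "x \<in> G" "fst x + \<epsilon> *\<^sub>R snd x = z"
proof -
  define H where "H = (\<lambda>x. (fst x, \<epsilon> *\<^sub>R snd x)) ` G"
  have "maximal_S_monotone H"
  proof (rule maximal_S_monotoneI)
    show "S_monotone H"
      unfolding S_monotone_iff H_def
      using S_monotoneD[OF maximal_S_monotone_imp_S_monotone[OF assms(1)]] \<open>0 < \<epsilon>\<close>
      by (auto simp: scaleR_diff_right[symmetric])
    fix u v assume uv: "\<And>x. x \<in> H \<Longrightarrow> 0 \<le> inner (fst x - u) (snd x - v)"
    have "(u, v /\<^sub>R \<epsilon>) \<in> G"
    proof (rule maximal_S_monotone_memI[OF assms(1)])
      fix x assume "x \<in> G"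
      then have "0 \<le> inner (fst x - u) (\<epsilon> *\<^sub>R snd x - v)"
        using uv[of "(fst x, \<epsilon> *\<^sub>R snd x)"] by (auto simp: H_def)
      moreover have "\<epsilon> *\<^sub>R snd x - v = \<epsilon> *\<^sub>R (snd x - v /\<^sub>R \<epsilon>)"
        using \<open>0 < \<epsilon>\<close> by (simp add: algebra_simps)
      ultimately show "0 \<le> inner (fst x - u) (snd x - v /\<^sub>R \<epsilon>)"
        using \<open>0 < \<epsilon>\<close> by (simp add: zero_le_mult_iff)
    qed
    then show "(u, v) \<in> H"
      unfolding H_def using \<open>0 < \<epsilon>\<close> by (auto intro!: image_eqI[of _ _ "(u, v /\<^sub>R \<epsilon>)"])
  qed
  then obtain y where "y \<in> H" "fst y + snd y = z" by (rule minty_surj)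
  then show ?thesis using that by (auto simp: H_def)
qed

text \<open>\<open>resolvent G \<epsilon> z\<close> is the point \<open>(r, s) \<in> G\<close> with \<open>r + \<epsilon> s = z\<close>, i.e. \<open>r = (I + \<epsilon> G)\<^sup>-\<^sup>1 z\<close>
  together with the value \<open>s\<close> of \<open>G\<close> at \<open>r\<close>.\<close>

definition resolvent :: "('a::euclidean_space \<times> 'a) set \<Rightarrow> real \<Rightarrow> 'a \<Rightarrow> 'a \<times> 'a" where
  "resolvent G \<epsilon> z = (THE x. x \<in> G \<and> fst x + \<epsilon> *\<^sub>R snd x = z)"

lemma
  assumes "maximal_S_monotone G" and "0 < \<epsilon>"
  shows resolvent_mem: "resolvent G \<epsilon> z \<in> G"
    and resolvent_eq: "fst (resolvent G \<epsilon> z) + \<epsilon> *\<^sub>R snd (resolvent G \<epsilon> z) = z"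
proof -
  obtain x where x: "x \<in> G" "fst x + \<epsilon> *\<^sub>R snd x = z"
    using minty_surj_scaled[OF assms] .
  have "\<exists>!x. x \<in> G \<and> fst x + \<epsilon> *\<^sub>R snd x = z"
  proof (rule ex1I)
    show "x \<in> G \<and> fst x + \<epsilon> *\<^sub>R snd x = z" using x ..
    fix y assume "y \<in> G \<and> fst y + \<epsilon> *\<^sub>R snd y = z"
    then show "y = x"
      using S_monotone_scaled_inj[OF maximal_S_monotone_imp_S_monotone[OF assms(1)] assms(2)] x
      by auto
  qed
  from theI'[OF this] show "resolvent G \<epsilon> z \<in> G" "fst (resolvent G \<epsilon> z) + \<epsilon> *\<^sub>R snd (resolvent G \<epsilon> z) = z"
    unfolding resolvent_def by auto
qed

lemma resolvent_nonexpansive: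
  assumes "maximal_S_monotone G"
  shows "norm (resolvent G 1 p - resolvent G 1 p') \<le> norm (p - p')"
proof -
  define x x' where "x = resolvent G 1 p" and "x' = resolvent G 1 p'"
  have "0 \<le> inner (fst x - fst x') (snd x - snd x')"
    unfolding x_def x'_def
    using S_monotoneD[OF maximal_S_monotone_imp_S_monotone[OF assms]
        resolvent_mem[OF assms zero_less_one] resolvent_mem[OF assms zero_less_one]] .
  then have "norm (fst x - fst x', snd x - snd x') \<le> norm ((fst x - fst x') + (snd x - snd x'))"
    by (rule norm_Pair_le_norm_add)
  moreover have "(fst x - fst x') + (snd x - snd x') = p - p'"
    using resolvent_eq[OF assms, of 1] by (simp add: x_def x'_def algebra_simps)
  moreover have "resolvent G 1 p - resolvent G 1 p' = (fst x - fst x', snd x - snd x')"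
    by (simp add: x_def x'_def prod_eq_iff)
  ultimately show ?thesis by simp
qed

lemma ex_mem_if_resolvent_bounded:
  assumes "maximal_S_monotone G"
    and "\<And>\<epsilon>. 0 < \<epsilon> \<Longrightarrow> \<epsilon> \<le> 1 \<Longrightarrow> norm (snd (resolvent G \<epsilon> u)) \<le> K"
  shows "\<exists>v. (u, v) \<in> G"
proof -
  define X where "X n = resolvent G (1 / (real n + 1)) u" for n
  have X: "X n \<in> G" "fst (X n) = u - (1 / (real n + 1)) *\<^sub>R snd (X n)" for n
    using resolvent_mem[OF assms(1)] resolvent_eq[OF assms(1), of "1 / (real n + 1)" u]
    by (simp_all add: X_def algebra_simps)
  have "snd (X n) \<in> cball 0 K" for n
    using assms(2)[of "1 / (real n + 1)"] by (simp add: X_def)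
  then obtain s r where "strict_mono r" "((\<lambda>n. snd (X n)) \<circ> r) \<longlonglongrightarrow> s"
    using seq_compactE[OF compact_imp_seq_compact[OF compact_cball[of 0 K]], of "\<lambda>n. snd (X n)"]
    by blast
  then have r: "strict_mono r" "(\<lambda>n. snd (X (r n))) \<longlonglongrightarrow> s" by (simp_all add: o_def)
  have "(\<lambda>n. 1 / (real n + 1)) \<longlonglongrightarrow> 0"
    using LIMSEQ_inverse_real_of_nat_add[of 0] by (simp add: inverse_eq_divide add.commute)
  then have "(\<lambda>n. 1 / (real (r n) + 1)) \<longlonglongrightarrow> 0"
    using LIMSEQ_subseq_LIMSEQ[OF _ r(1)] by (auto simp: o_def)
  then have "(\<lambda>n. u - (1 / (real (r n) + 1)) *\<^sub>R snd (X (r n))) \<longlonglongrightarrow> u - 0 *\<^sub>R s"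
    using r(2) by (intro tendsto_intros)
  then have fst_lim: "(\<lambda>n. fst (X (r n))) \<longlonglongrightarrow> u"
    by (simp add: X(2)[of "r n" for n])
  have "(u, s) \<in> G"
  proof (rule maximal_S_monotone_memI[OF assms(1)])
    fix x assume "x \<in> G"
    have "(\<lambda>n. inner (fst x - fst (X (r n))) (snd x - snd (X (r n)))) \<longlonglongrightarrow> inner (fst x - u) (snd x - s)"
      using fst_lim r(2) by (intro tendsto_intros)
    moreover have "0 \<le> inner (fst x - fst (X (r n))) (snd x - snd (X (r n)))" for n
      using S_monotoneD[OF maximal_S_monotone_imp_S_monotone[OF assms(1)] \<open>x \<in> G\<close> X(1)] .
    ultimately show "0 \<le> inner (fst x - u) (snd x - s)"
      using LIMSEQ_le_const by blast
  qed
  then show ?thesis by blast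
qed

lemma maximal_S_monotoneI_surj:
  assumes "S_monotone G" and "\<And>z. \<exists>x\<in>G. fst x + snd x = z"
  shows "maximal_S_monotone G"
proof (rule maximal_S_monotoneI[OF assms(1)])
  fix u v assume uv: "\<And>x. x \<in> G \<Longrightarrow> 0 \<le> inner (fst x - u) (snd x - v)"
  obtain x where x: "x \<in> G" "fst x + snd x = u + v" using assms(2) by blast
  have e: "snd x - v = - (fst x - u)" using x(2) by (simp add: algebra_simps)
  have "0 \<le> inner (fst x - u) (snd x - v)" by (rule uv[OF x(1)])
  then have "inner (fst x - u) (fst x - u) \<le> 0" unfolding e by (simp only: inner_minus_right)
  then have "fst x - u = 0" by (metis inner_gt_zero_iff linorder_not_le)
  then have "x = (u, v)" using e by (cases x) simp
  then show "(u, v) \<in> G" using x(1) by simp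
qed

lemma maximal_S_monotone_Id: "maximal_S_monotone Id"
proof (rule maximal_S_monotoneI_surj)
  show "S_monotone Id" unfolding S_monotone_iff by auto
  fix z :: 'a
  have "z /\<^sub>R 2 + z /\<^sub>R 2 = (z + z) /\<^sub>R 2" by (simp only: scaleR_add_right)
  also have "z + z = 2 *\<^sub>R z" by (simp add: scaleR_2)
  finally have "fst (z /\<^sub>R 2, z /\<^sub>R 2) + snd (z /\<^sub>R 2, z /\<^sub>R 2) = z" by simp
  then show "\<exists>x\<in>Id. fst x + snd x = z" by blast
qed

section \<open>The dual objective \<open>psi\<close>\<close>

definition psi_term :: "('a::euclidean_space \<times> 'a) \<Rightarrow> 'a \<times> 'a \<Rightarrow> real" where
  "psi_term x y = Sform x y - Sform x x / 2"

lemma psi_SUP_psi_term: "psi G y = (SUP x\<in>G. ereal (psi_term x y))"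
  unfolding psi_def psi_term_def ..

lemma psi_term_Pair: "psi_term x (u, v) = inner (snd x) u + inner (fst x) v - inner (fst x) (snd x)"
  unfolding psi_term_def Sform_self by (simp add: Sform_def)

lemma psi_term_minus_inner: "psi_term x (u, v) - inner u v = - inner (fst x - u) (snd x - v)"
  unfolding psi_term_Pair by (simp add: inner_diff_left inner_diff_right inner_commute)

lemma psi_term_le_psi: "x \<in> G \<Longrightarrow> ereal (psi_term x y) \<le> psi G y"
  unfolding psi_SUP_psi_term by (rule SUP_upper)

lemma psi_le_ereal_iff: "psi G y \<le> ereal K \<longleftrightarrow> (\<forall>x\<in>G. psi_term x y \<le> K)"
  unfolding psi_SUP_psi_term by (simp add: SUP_le_iff)

lemma borel_measurable_psi: "psi G \<in> borel_measurable borel"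
proof (rule borel_measurableI_greater)
  fix c :: ereal
  have opn: "open {y. c < ereal (psi_term x y)}" for x
  proof (cases c)
    case (real r)
    have "continuous_on UNIV (psi_term x)"
      unfolding psi_term_def Sform_def by (intro continuous_intros)
    then have "open {y. r < psi_term x y}"
      by (intro open_Collect_less continuous_intros) auto
    then show ?thesis using real by simp
  qed simp_all
  have "{y \<in> space borel. c < psi G y} = (\<Union>x\<in>G. {y. c < ereal (psi_term x y)})"
    by (auto simp: psi_SUP_psi_term less_SUP_iff)
  moreover have "open (\<Union>x\<in>G. {y. c < ereal (psi_term x y)})" using opn by blast
  ultimately show "{y \<in> space borel. c < psi G y} \<in> sets borel" by simp
qed

lemma borel_measurable_psi_Pair:
  assumes "U \<in> borel_measurable M" and "V \<in> borel_measurable M"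
  shows "(\<lambda>w. psi G (U w, V w)) \<in> borel_measurable M"
proof -
  have "(\<lambda>w. (U w, V w)) \<in> borel_measurable M" using assms by (rule borel_measurable_Pair)
  from measurable_compose[OF this borel_measurable_psi] show ?thesis by (simp add: o_def)
qed

text \<open>Fitzpatrick's inequality: a point with \<open>psi G (u, v) < \<langle>u, v\<rangle>\<close> would be monotonically
  related to \<open>G\<close>, hence in \<open>G\<close>, where \<open>psi_term (u, v) (u, v) = \<langle>u, v\<rangle>\<close>.\<close>

lemma inner_le_psi:
  assumes "maximal_S_monotone G"
  shows "ereal (inner u v) \<le> psi G (u, v)"
proof (rule ccontr)
  assume "\<not> ereal (inner u v) \<le> psi G (u, v)"
  then have lt: "psi G (u, v) < ereal (inner u v)" by simp
  have "(u, v) \<in> G"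
  proof (rule maximal_S_monotone_memI[OF assms])
    fix x assume "x \<in> G"
    have "ereal (psi_term x (u, v)) < ereal (inner u v)"
      using psi_term_le_psi[OF \<open>x \<in> G\<close>, of "(u, v)"] lt by (rule le_less_trans)
    then show "0 \<le> inner (fst x - u) (snd x - v)"
      using psi_term_minus_inner[of x u v] by simp
  qed
  then have "ereal (psi_term (u, v) (u, v)) \<le> psi G (u, v)" by (rule psi_term_le_psi)
  moreover have "psi_term (u, v) (u, v) = inner u v" by (simp add: psi_term_Pair inner_commute)
  ultimately show False using lt by simp
qed

lemma psi_minus_inner_ge_resolvent:
  assumes "maximal_S_monotone G"
  shows "ereal ((norm (resolvent G 1 (u + v) - (u, v)))\<^sup>2 / 2) \<le> psi G (u, v) - ereal (inner u v)"
proof -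
  define x where "x = resolvent G 1 (u + v)"
  define a where "a = fst x - u"
  have sv: "snd x - v = - a"
    using resolvent_eq[OF assms zero_less_one, of "u + v"] by (simp add: x_def a_def algebra_simps)
  have "psi_term x (u, v) - inner u v = (norm a)\<^sup>2"
    unfolding psi_term_minus_inner sv a_def[symmetric] by (simp add: power2_norm_eq_inner)
  moreover have "(norm (x - (u, v)))\<^sup>2 = 2 * (norm a)\<^sup>2"
  proof -
    have "x - (u, v) = (a, - a)" using sv by (simp add: a_def prod_eq_iff)
    then show ?thesis by (simp add: norm_Pair)
  qed
  moreover have "ereal (psi_term x (u, v)) \<le> psi G (u, v)"
    unfolding x_def using resolvent_mem[OF assms zero_less_one] by (rule psi_term_le_psi)
  ultimately have "ereal (inner u v + (norm (x - (u, v)))\<^sup>2 / 2) \<le> psi G (u, v)"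
    by (metis add.commute diff_add_cancel nonzero_mult_div_cancel_left zero_neq_numeral)
  then show ?thesis
    unfolding x_def by (simp add: ereal_le_minus_iff algebra_simps)
qed

lemma psi_Id_le: "psi Id (u, v) \<le> ereal ((norm u)\<^sup>2 + (norm v)\<^sup>2)"
  unfolding psi_le_ereal_iff
proof
  fix x :: "'a \<times> 'a" assume "x \<in> Id"
  then obtain r where x: "x = (r, r)" by auto
  have "4 * (inner r (u + v) - inner r r) \<le> (norm (u + v))\<^sup>2"
  proof -
    have "0 \<le> inner (2 *\<^sub>R r - (u + v)) (2 *\<^sub>R r - (u + v))" by simp
    then show ?thesis
      by (simp add: inner_diff_left inner_diff_right inner_commute power2_norm_eq_inner algebra_simps)
  qed
  moreover have "(norm (u + v))\<^sup>2 \<le> (norm u + norm v)\<^sup>2"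
    by (intro power_mono norm_triangle_ineq) simp
  moreover have "(norm u + norm v)\<^sup>2 \<le> 2 * ((norm u)\<^sup>2 + (norm v)\<^sup>2)"
    using sum_squares_bound[of "norm u" "norm v"] by (simp add: power2_eq_square algebra_simps)
  moreover have "0 \<le> (norm u)\<^sup>2 + (norm v)\<^sup>2" by simp
  moreover have "psi_term x (u, v) = inner r (u + v) - inner r r"
    unfolding x psi_term_Pair by (simp add: inner_add_right)
  ultimately show "psi_term x (u, v) \<le> (norm u)\<^sup>2 + (norm v)\<^sup>2" by argo
qed

section \<open>Optimal sets have full domain when the support of \<open>U\<close> spans\<close>

definition psi_dom :: "('a::euclidean_space \<times> 'a) set \<Rightarrow> 'a set" where
  "psi_dom G = {u. \<exists>v. psi G (u, v) < \<infinity>}"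

lemma psi_less_top_iff: "psi G y < \<infinity> \<longleftrightarrow> (\<exists>K. \<forall>x\<in>G. psi_term x y \<le> K)"
proof -
  have "psi G y < \<infinity> \<longleftrightarrow> (\<exists>K. psi G y \<le> ereal K)"
    by (cases "psi G y") auto
  then show ?thesis by (simp add: psi_le_ereal_iff)
qed

lemma convex_psi_dom: "convex (psi_dom G)"
proof (rule convexI)
  fix u1 u2 and a b :: real
  assume u: "u1 \<in> psi_dom G" "u2 \<in> psi_dom G" and ab: "0 \<le> a" "0 \<le> b" "a + b = 1"
  obtain v1 K1 where K1: "\<forall>x\<in>G. psi_term x (u1, v1) \<le> K1"
    using u(1) unfolding psi_dom_def psi_less_top_iff by blast
  obtain v2 K2 where K2: "\<forall>x\<in>G. psi_term x (u2, v2) \<le> K2"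
    using u(2) unfolding psi_dom_def psi_less_top_iff by blast
  have "psi_term x (a *\<^sub>R u1 + b *\<^sub>R u2, a *\<^sub>R v1 + b *\<^sub>R v2) \<le> a * K1 + b * K2" if "x \<in> G" for x
  proof -
    have "psi_term x (a *\<^sub>R u1 + b *\<^sub>R u2, a *\<^sub>R v1 + b *\<^sub>R v2) = a * psi_term x (u1, v1) + b * psi_term x (u2, v2)"
      unfolding psi_term_Pair using ab(3)
      by (simp add: inner_add_right algebra_simps) (metis add_diff_cancel_left' distrib_right mult_1)
    also have "\<dots> \<le> a * K1 + b * K2"
      using K1 K2 that ab by (intro add_mono mult_left_mono) auto
    finally show ?thesis .
  qed
  then show "a *\<^sub>R u1 + b *\<^sub>R u2 \<in> psi_dom G"
    unfolding psi_dom_def psi_less_top_iff by blast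
qed

lemma inner_snd_le_if_psi_le:
  assumes "psi G (u, v) \<le> ereal K" "x \<in> G" "fst x + \<epsilon> *\<^sub>R snd x = u0" "0 < \<epsilon>" "\<epsilon> \<le> 1"
  shows "inner (snd x) (u - u0) \<le> K - inner u0 v + (norm v)\<^sup>2 / 4"
proof -
  obtain r s where x: "x = (r, s)" by (cases x)
  have r: "r = u0 - \<epsilon> *\<^sub>R s" using assms(3) x by (simp add: algebra_simps)
  have "inner s v - inner s s \<le> (norm v)\<^sup>2 / 4"
  proof -
    have "0 \<le> inner (s - v /\<^sub>R 2) (s - v /\<^sub>R 2)" by simp
    then show ?thesis
      by (simp add: inner_diff_left inner_diff_right inner_commute power2_norm_eq_inner algebra_simps)
  qed
  then have "\<epsilon> * (inner s v - inner s s) \<le> \<epsilon> * ((norm v)\<^sup>2 / 4)"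
    using assms(4) by (intro mult_left_mono) auto
  also have "\<dots> \<le> (norm v)\<^sup>2 / 4"
    using assms(4,5) by (simp add: mult_left_le_one_le)
  finally have "\<epsilon> * (inner s v - inner s s) \<le> (norm v)\<^sup>2 / 4" .
  moreover have "inner s (u - u0) = psi_term x (u, v) - inner u0 v + \<epsilon> * (inner s v - inner s s)"
    unfolding psi_term_Pair x r by (simp add: inner_diff_left inner_diff_right inner_commute algebra_simps)
  moreover have "psi_term x (u, v) \<le> K" using assms(1,2) psi_le_ereal_iff by blast
  ultimately show ?thesis using x by simp
qed

text \<open>If \<open>psi G (u, \<cdot>)\<close> is somewhere finite for every \<open>u\<close>, testing with \<open>u = u0 \<plusminus> b\<close> for the
  basis vectors \<open>b\<close> bounds the resolvent values over \<open>u0\<close>.\<close>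

lemma ex_mem_if_psi_dom_UNIV:
  assumes "maximal_S_monotone G" and "psi_dom G = UNIV"
  shows "\<exists>v. (u0, v) \<in> G"
proof -
  have "\<exists>vK. psi G (u, fst vK) \<le> ereal (snd vK)" for u
  proof -
    have "u \<in> psi_dom G" using assms(2) by simp
    then obtain v K where "\<forall>x\<in>G. psi_term x (u, v) \<le> K"
      unfolding psi_dom_def psi_less_top_iff by blast
    then have "psi G (u, fst (v, K)) \<le> ereal (snd (v, K))" by (simp add: psi_le_ereal_iff)
    then show ?thesis ..
  qed
  then obtain VK where "\<And>u. psi G (u, fst (VK u)) \<le> ereal (snd (VK u))" by metis
  define V K where "V u = fst (VK u)" and "K u = snd (VK u)" for u
  have VK: "\<And>u. psi G (u, V u) \<le> ereal (K u)"
    unfolding V_def K_def by fact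
  define C where "C u = K u - inner u0 (V u) + (norm (V u))\<^sup>2 / 4" for u
  show ?thesis
  proof (rule ex_mem_if_resolvent_bounded[OF assms(1)])
    fix \<epsilon> :: real assume e: "0 < \<epsilon>" "\<epsilon> \<le> 1"
    define x where "x = resolvent G \<epsilon> u0"
    have x: "x \<in> G" "fst x + \<epsilon> *\<^sub>R snd x = u0"
      unfolding x_def using resolvent_mem resolvent_eq assms(1) e(1) by blast+
    have "\<bar>inner (snd x) b\<bar> \<le> \<bar>C (u0 + b)\<bar> + \<bar>C (u0 - b)\<bar>" for b
    proof -
      have "inner (snd x) ((u0 + b) - u0) \<le> C (u0 + b)" "inner (snd x) ((u0 - b) - u0) \<le> C (u0 - b)"
        unfolding C_def using inner_snd_le_if_psi_le[OF VK x e] by blast+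
      then show ?thesis by (simp add: inner_minus_right)
    qed
    then have "(\<Sum>b\<in>Basis. \<bar>inner (snd x) b\<bar>) \<le> (\<Sum>b\<in>Basis. \<bar>C (u0 + b)\<bar> + \<bar>C (u0 - b)\<bar>)"
      by (intro sum_mono)
    then have "norm (snd x) \<le> (\<Sum>b\<in>Basis. \<bar>C (u0 + b)\<bar> + \<bar>C (u0 - b)\<bar>)"
      using norm_le_l1[of "snd x"] by linarith
    then show "norm (snd (resolvent G \<epsilon> u0)) \<le> (\<Sum>b\<in>Basis. \<bar>C (u0 + b)\<bar> + \<bar>C (u0 - b)\<bar>)"
      by (simp add: x_def)
  qed
qed

lemma law_support_subset_closure:
  assumes "U \<in> borel_measurable M" and "AE w in M. U w \<in> D"
  shows "law_support M U \<subseteq> closure D"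
proof
  fix x assume x: "x \<in> law_support M U"
  show "x \<in> closure D"
  proof (rule ccontr)
    assume "x \<notin> closure D"
    then obtain e where "e > 0" "ball x e \<subseteq> - closure D"
      using open_contains_ball[of "- closure D"] by auto
    have "AE w in M. U w \<notin> ball x e"
      using assms(2)
    proof (rule eventually_mono)
      fix w assume "U w \<in> D"
      then show "U w \<notin> ball x e" using \<open>ball x e \<subseteq> - closure D\<close> closure_subset[of D] by blast
    qed
    then have "emeasure M {w \<in> space M. U w \<in> ball x e} = 0" by (rule emeasure_eq_0_AE)
    moreover have "emeasure (distr M borel U) (ball x e) = emeasure M (U -` ball x e \<inter> space M)"
      by (rule emeasure_distr[OF assms(1)]) simp
    moreover have "U -` ball x e \<inter> space M = {w \<in> space M. U w \<in> ball x e}" by auto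
    moreover have "emeasure (distr M borel U) (ball x e) > 0"
      using x \<open>e > 0\<close> unfolding law_support_def by blast
    ultimately show False by simp
  qed
qed

lemma convex_eq_UNIV_if_hull_subset_closure:
  fixes D :: "'a::euclidean_space set"
  assumes "convex D" and "convex hull S = UNIV" and "S \<subseteq> closure D"
  shows "D = UNIV"
proof -
  have "convex hull S \<subseteq> closure D"
    using assms(3) convex_closure[OF assms(1)] by (rule hull_minimal)
  then have "closure D = UNIV" using assms(2) by auto
  then have "interior D = UNIV" using convex_interior_closure[OF assms(1)] by simp
  then show ?thesis using interior_subset[of D] by auto
qed

lemma eexpectation_eq_top:
  "(\<integral>\<^sup>+ w. e2ennreal (f w) \<partial>M) = \<infinity> \<Longrightarrow> eexpectation M f = \<infinity>"
  unfolding eexpectation_def by (cases "enn2ereal (\<integral>\<^sup>+ w. e2ennreal (- f w) \<partial>M)") auto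

lemma eexpectation_less_top:
  assumes "(\<integral>\<^sup>+ w. e2ennreal (f w) \<partial>M) < \<infinity>"
  shows "eexpectation M f < \<infinity>"
proof -
  obtain a where "(\<integral>\<^sup>+ w. e2ennreal (f w) \<partial>M) = ennreal a" "0 \<le> a"
    using assms by (cases "(\<integral>\<^sup>+ w. e2ennreal (f w) \<partial>M)") auto
  then show ?thesis unfolding eexpectation_def
    by (cases "enn2ereal (\<integral>\<^sup>+ w. e2ennreal (- f w) \<partial>M)") auto
qed

lemma eexpectation_psi_Id_less_top:
  assumes "integrable M (\<lambda>w. (norm (U w))\<^sup>2)" and "integrable M (\<lambda>w. (norm (V w))\<^sup>2)"
  shows "eexpectation M (\<lambda>w. psi Id (U w, V w)) < \<infinity>"
proof (rule eexpectation_less_top)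
  have "(\<integral>\<^sup>+ w. e2ennreal (psi Id (U w, V w)) \<partial>M)
      \<le> (\<integral>\<^sup>+ w. ennreal ((norm (U w))\<^sup>2) + ennreal ((norm (V w))\<^sup>2) \<partial>M)"
    using e2ennreal_mono[OF psi_Id_le] by (intro nn_integral_mono) simp
  also have "\<dots> = (\<integral>\<^sup>+ w. ennreal ((norm (U w))\<^sup>2) \<partial>M) + (\<integral>\<^sup>+ w. ennreal ((norm (V w))\<^sup>2) \<partial>M)"
    using assms by (intro nn_integral_add) auto
  also have "\<dots> < \<infinity>"
    using integrableD(2)[OF assms(1)] integrableD(2)[OF assms(2)] by (simp add: less_top)
  finally show "(\<integral>\<^sup>+ w. e2ennreal (psi Id (U w, V w)) \<partial>M) < \<infinity>" .
qed

theorem dom_eq_UNIV_if_dual_optimal: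
  fixes U V :: "'s \<Rightarrow> 'a::euclidean_space"
  assumes "U \<in> borel_measurable M" "V \<in> borel_measurable M"
    and "integrable M (\<lambda>w. (norm (U w))\<^sup>2)" "integrable M (\<lambda>w. (norm (V w))\<^sup>2)"
    and "convex hull (law_support M U) = UNIV" and "dual_optimal M U V G"
  shows "{u. \<exists>v. (u, v) \<in> G} = UNIV"
proof -
  have G: "maximal_S_monotone G" using assms(6) unfolding dual_optimal_def by blast
  have "eexpectation M (\<lambda>w. psi G (U w, V w)) \<le> eexpectation M (\<lambda>w. psi Id (U w, V w))"
    using assms(6) maximal_S_monotone_Id unfolding dual_optimal_def by blast
  also have "\<dots> < \<infinity>" using assms(3,4) by (rule eexpectation_psi_Id_less_top)
  finally have "(\<integral>\<^sup>+ w. e2ennreal (psi G (U w, V w)) \<partial>M) \<noteq> \<infinity>"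
    using eexpectation_eq_top[of M "\<lambda>w. psi G (U w, V w)"] by auto
  then have "AE w in M. e2ennreal (psi G (U w, V w)) \<noteq> \<infinity>"
    using borel_measurable_psi_Pair[OF assms(1,2)] by (intro nn_integral_PInf_AE) auto
  then have "AE w in M. U w \<in> psi_dom G"
  proof eventually_elim
    case (elim w)
    then have "psi G (U w, V w) < \<infinity>" by (cases "psi G (U w, V w)") auto
    then show ?case unfolding psi_dom_def by blast
  qed
  then have "law_support M U \<subseteq> closure (psi_dom G)"
    by (rule law_support_subset_closure[OF assms(1)])
  then have "psi_dom G = UNIV"
    by (rule convex_eq_UNIV_if_hull_subset_closure[OF convex_psi_dom assms(5)])
  then show ?thesis using ex_mem_if_psi_dom_UNIV[OF G] by auto
qed

section \<open>Truncation\<close>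

text \<open>The graph of \<open>(G\<^sup>-\<^sup>1 + N)\<^sup>-\<^sup>1\<close>, where \<open>N\<close> is the normal cone of the closed ball of radius \<open>R\<close>:
  values of norm below \<open>R\<close> are kept, and each value \<open>s\<close> of norm \<open>R\<close> is spread along the ray
  \<open>r + t s\<close>, \<open>t \<ge> 0\<close>.\<close>

definition truncation :: "('a::euclidean_space \<times> 'a) set \<Rightarrow> real \<Rightarrow> ('a \<times> 'a) set" where
  "truncation G R = {(fst x + t *\<^sub>R snd x, snd x) | x t.
     x \<in> G \<and> norm (snd x) \<le> R \<and> 0 \<le> t \<and> (t = 0 \<or> norm (snd x) = R)}"

lemma truncation_memI:
  "x \<in> G \<Longrightarrow> norm (snd x) \<le> R \<Longrightarrow> 0 \<le> t \<Longrightarrow> t = 0 \<or> norm (snd x) = R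
    \<Longrightarrow> (fst x + t *\<^sub>R snd x, snd x) \<in> truncation G R"
  unfolding truncation_def by blast

lemma norm_snd_le_if_mem_truncation: "y \<in> truncation G R \<Longrightarrow> norm (snd y) \<le> R"
  unfolding truncation_def by auto

lemma ray_term_nonneg:
  fixes a b :: "'a::real_inner"
  assumes "0 \<le> t" "t = 0 \<or> norm a = R" "norm b \<le> R"
  shows "0 \<le> t * (inner a a - inner a b)"
proof (cases "t = 0")
  case False
  then have "norm a = R" using assms(2) by simp
  have "inner a b \<le> norm a * norm b" by (rule norm_cauchy_schwarz)
  also have "\<dots> \<le> norm a * norm a" using assms(3) \<open>norm a = R\<close> by (intro mult_left_mono) auto
  also have "\<dots> = inner a a" by (simp add: power2_eq_square[symmetric] power2_norm_eq_inner)
  finally show ?thesis using assms(1) by simp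
qed simp

lemma S_monotone_truncation:
  assumes "S_monotone G"
  shows "S_monotone (truncation G R)"
  unfolding S_monotone_iff
proof (intro ballI)
  fix y1 y2 assume "y1 \<in> truncation G R" "y2 \<in> truncation G R"
  then obtain x1 t1 x2 t2
    where y: "y1 = (fst x1 + t1 *\<^sub>R snd x1, snd x1)" "y2 = (fst x2 + t2 *\<^sub>R snd x2, snd x2)"
      and x1: "x1 \<in> G" "norm (snd x1) \<le> R" "0 \<le> t1" "t1 = 0 \<or> norm (snd x1) = R"
      and x2: "x2 \<in> G" "norm (snd x2) \<le> R" "0 \<le> t2" "t2 = 0 \<or> norm (snd x2) = R"
    unfolding truncation_def by blast
  have "inner (fst y1 - fst y2) (snd y1 - snd y2) = inner (fst x1 - fst x2) (snd x1 - snd x2)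
      + t1 * (inner (snd x1) (snd x1) - inner (snd x1) (snd x2))
      + t2 * (inner (snd x2) (snd x2) - inner (snd x2) (snd x1))"
    unfolding y by (simp add: inner_add_left inner_diff_left inner_diff_right inner_commute algebra_simps)
  moreover have "0 \<le> inner (fst x1 - fst x2) (snd x1 - snd x2)"
    using assms x1(1) x2(1) by (rule S_monotoneD)
  moreover have "0 \<le> t1 * (inner (snd x1) (snd x1) - inner (snd x1) (snd x2))"
    using x1 x2 by (intro ray_term_nonneg) auto
  moreover have "0 \<le> t2 * (inner (snd x2) (snd x2) - inner (snd x2) (snd x1))"
    using x1 x2 by (intro ray_term_nonneg) auto
  ultimately show "0 \<le> inner (fst y1 - fst y2) (snd y1 - snd y2)" by linarith
qed

lemma psi_truncation_le:
  assumes "norm v \<le> R"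
  shows "psi (truncation G R) (u, v) \<le> psi G (u, v)"
  unfolding psi_SUP_psi_term
proof (rule SUP_least)
  fix y assume "y \<in> truncation G R"
  then obtain x t where y: "y = (fst x + t *\<^sub>R snd x, snd x)"
    and x: "x \<in> G" "norm (snd x) \<le> R" "0 \<le> t" "t = 0 \<or> norm (snd x) = R"
    unfolding truncation_def by blast
  have "psi_term y (u, v) = psi_term x (u, v) - t * (inner (snd x) (snd x) - inner (snd x) v)"
    unfolding y psi_term_Pair by (simp add: inner_add_left inner_commute algebra_simps)
  also have "\<dots> \<le> psi_term x (u, v)"
    using ray_term_nonneg[OF x(3,4) assms] by linarith
  finally have "ereal (psi_term y (u, v)) \<le> ereal (psi_term x (u, v))" by simp
  also have "\<dots> \<le> psi G (u, v)" using x(1) by (rule psi_term_le_psi)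
  finally show "ereal (psi_term y (u, v)) \<le> (SUP x\<in>G. ereal (psi_term x (u, v)))"
    unfolding psi_SUP_psi_term .
qed

lemma norm_snd_diff_le_if_scaled:
  assumes "S_monotone G" "x \<in> G" "x' \<in> G" "1 \<le> \<epsilon>"
    and "fst x + \<epsilon> *\<^sub>R snd x = z" "fst x' + \<epsilon>' *\<^sub>R snd x' = z"
  shows "norm (snd x - snd x') \<le> \<bar>\<epsilon>' - \<epsilon>\<bar> * norm (snd x')"
proof -
  define d where "d = snd x - snd x'"
  have r: "fst x - fst x' = - \<epsilon> *\<^sub>R d + (\<epsilon>' - \<epsilon>) *\<^sub>R snd x'"
    using assms(5,6) unfolding d_def by (simp add: algebra_simps)
  have "0 \<le> inner (fst x - fst x') (snd x - snd x')" using assms(1-3) by (rule S_monotoneD)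
  then have "\<epsilon> * inner d d \<le> (\<epsilon>' - \<epsilon>) * inner (snd x') d"
    unfolding r d_def[symmetric] by (simp add: inner_add_left algebra_simps)
  also have "\<dots> \<le> \<bar>\<epsilon>' - \<epsilon>\<bar> * \<bar>inner (snd x') d\<bar>"
    by (metis abs_ge_self abs_mult)
  also have "\<dots> \<le> \<bar>\<epsilon>' - \<epsilon>\<bar> * (norm (snd x') * norm d)"
    by (rule mult_left_mono[OF Cauchy_Schwarz_ineq2]) simp
  finally have "\<epsilon> * (norm d)\<^sup>2 \<le> (\<bar>\<epsilon>' - \<epsilon>\<bar> * norm (snd x')) * norm d"
    by (simp add: power2_norm_eq_inner mult.assoc)
  moreover have "(norm d)\<^sup>2 \<le> \<epsilon> * (norm d)\<^sup>2"
    using assms(4) by (simp add: mult_le_cancel_right1)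
  ultimately have "norm d * norm d \<le> (\<bar>\<epsilon>' - \<epsilon>\<bar> * norm (snd x')) * norm d"
    by (simp add: power2_eq_square)
  then show ?thesis
    unfolding d_def[symmetric] by (cases "norm d = 0") (simp_all add: mult_le_cancel_right)
qed

lemma continuous_on_snd_resolvent:
  assumes "maximal_S_monotone G"
  shows "continuous_on {1..} (\<lambda>\<epsilon>. snd (resolvent G \<epsilon> z))"
  unfolding continuous_on_iff
proof (intro ballI allI impI)
  fix \<epsilon> e :: real assume "\<epsilon> \<in> {1..}" "0 < e"
  define N where "N = norm (snd (resolvent G \<epsilon> z))"
  have "0 \<le> N" by (simp add: N_def)
  have "dist (snd (resolvent G \<epsilon>' z)) (snd (resolvent G \<epsilon> z)) < e"
    if "\<epsilon>' \<in> {1..}" "dist \<epsilon>' \<epsilon> < e / (N + 1)" for \<epsilon>'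
  proof -
    have "0 < \<epsilon>" "0 < \<epsilon>'" using that(1) \<open>\<epsilon> \<in> {1..}\<close> by auto
    have "dist (snd (resolvent G \<epsilon>' z)) (snd (resolvent G \<epsilon> z)) \<le> \<bar>\<epsilon> - \<epsilon>'\<bar> * N"
      unfolding dist_norm N_def
      using that(1) resolvent_mem[OF assms] resolvent_eq[OF assms] \<open>0 < \<epsilon>\<close> \<open>0 < \<epsilon>'\<close>
      by (intro norm_snd_diff_le_if_scaled[OF maximal_S_monotone_imp_S_monotone[OF assms]]) auto
    also have "\<dots> \<le> e / (N + 1) * N"
      using that(2) \<open>0 \<le> N\<close> by (intro mult_right_mono) (auto simp: dist_real_def)
    also have "\<dots> = e * (N / (N + 1))" by simp
    also have "\<dots> < e * 1"
      using \<open>0 < e\<close> \<open>0 \<le> N\<close> by (intro mult_strict_left_mono) (simp_all add: divide_simps)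
    finally show ?thesis by simp
  qed
  moreover have "0 < e / (N + 1)" using \<open>0 < e\<close> \<open>0 \<le> N\<close> by simp
  ultimately show "\<exists>d>0. \<forall>\<epsilon>'\<in>{1..}. dist \<epsilon>' \<epsilon> < d \<longrightarrow>
      dist (snd (resolvent G \<epsilon>' z)) (snd (resolvent G \<epsilon> z)) < e"
    by blast
qed

lemma norm_snd_le_if_scale_large:
  assumes "S_monotone G" "x \<in> G" "x1 \<in> G" "fst x + \<epsilon> *\<^sub>R snd x = z" "0 < \<epsilon>"
    and "norm (snd x1) < R" "2 * norm (z - fst x1) \<le> \<epsilon> * (R - norm (snd x1))"
  shows "norm (snd x) \<le> R"
proof (rule ccontr)
  define a b c where "a = norm (snd x)" and "b = norm (snd x1)" and "c = norm (z - fst x1)"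
  assume "\<not> norm (snd x) \<le> R"
  then have "R < a" "b < R" "0 \<le> a" "0 \<le> b" "0 \<le> c"
    using assms(6) by (auto simp: a_def b_def c_def)
  have "0 \<le> inner (fst x - fst x1) (snd x - snd x1)" using assms(1-3) by (rule S_monotoneD)
  moreover have "fst x = z - \<epsilon> *\<^sub>R snd x" using assms(4) by (simp add: algebra_simps)
  ultimately have "\<epsilon> * inner (snd x) (snd x - snd x1) \<le> inner (z - fst x1) (snd x - snd x1)"
    by (simp add: inner_diff_left algebra_simps)
  also have "\<dots> \<le> c * (a + b)"
  proof -
    have "inner (z - fst x1) (snd x - snd x1) \<le> c * norm (snd x - snd x1)"
      unfolding c_def by (rule norm_cauchy_schwarz)
    also have "\<dots> \<le> c * (a + b)"
      using \<open>0 \<le> c\<close> norm_triangle_ineq4[of "snd x" "snd x1"]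
      by (intro mult_left_mono) (auto simp: a_def b_def)
    finally show ?thesis .
  qed
  also have "\<dots> \<le> c * (2 * a)" using \<open>0 \<le> c\<close> \<open>b < R\<close> \<open>R < a\<close> by (intro mult_left_mono) auto
  also have "\<dots> \<le> \<epsilon> * (R - b) * a"
    using mult_right_mono[OF assms(7) \<open>0 \<le> a\<close>] by (simp add: b_def c_def algebra_simps)
  finally have "\<epsilon> * inner (snd x) (snd x - snd x1) \<le> \<epsilon> * ((R - b) * a)" by (simp add: mult.assoc)
  then have "inner (snd x) (snd x - snd x1) \<le> (R - b) * a" using assms(5) by simp
  moreover have "a * (a - b) \<le> inner (snd x) (snd x - snd x1)"
  proof -
    have "inner (snd x) (snd x1) \<le> a * b" unfolding a_def b_def by (rule norm_cauchy_schwarz)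
    moreover have "inner (snd x) (snd x) = a * a"
      by (simp add: a_def power2_eq_square[symmetric] power2_norm_eq_inner)
    ultimately show ?thesis by (simp add: inner_diff_right algebra_simps)
  qed
  ultimately have "a * (a - b) \<le> a * (R - b)" by (simp add: mult.commute)
  then show False using \<open>R < a\<close> \<open>b < R\<close> \<open>0 \<le> b\<close> by (simp add: mult_le_cancel_left)
qed

text \<open>The resolvent values over \<open>z\<close> depend continuously on the scale and have norm at most \<open>R\<close> for
  large scales, so either the scale \<open>1\<close> already works or some scale \<open>\<epsilon> \<ge> 1\<close> gives norm exactly \<open>R\<close>,
  and then \<open>(r + (\<epsilon> - 1) s, s)\<close> is a point of the truncation over \<open>z\<close>.\<close>

lemma truncation_surj:
  assumes "maximal_S_monotone G" "x1 \<in> G" "norm (snd x1) < R"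
  shows "\<exists>y\<in>truncation G R. fst y + snd y = z"
proof -
  define X where "X \<epsilon> = resolvent G \<epsilon> z" for \<epsilon>
  have X: "X \<epsilon> \<in> G" "fst (X \<epsilon>) + \<epsilon> *\<^sub>R snd (X \<epsilon>) = z" if "1 \<le> \<epsilon>" for \<epsilon>
  proof -
    have "0 < \<epsilon>" using that by simp
    then show "X \<epsilon> \<in> G" "fst (X \<epsilon>) + \<epsilon> *\<^sub>R snd (X \<epsilon>) = z"
      unfolding X_def using resolvent_mem resolvent_eq assms(1) by blast+
  qed
  define E where "E = max 1 (2 * norm (z - fst x1) / (R - norm (snd x1)))"
  have "1 \<le> E" by (simp add: E_def)
  have "norm (snd (X E)) \<le> R"
  proof (rule norm_snd_le_if_scale_large)
    have "2 * norm (z - fst x1) / (R - norm (snd x1)) \<le> E" by (simp add: E_def)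
    then show "2 * norm (z - fst x1) \<le> E * (R - norm (snd x1))"
      using assms(3) by (simp add: pos_divide_le_eq)
  qed (use assms maximal_S_monotone_imp_S_monotone X \<open>1 \<le> E\<close> in auto)
  have cont: "continuous_on {1..E} (\<lambda>\<epsilon>. norm (snd (X \<epsilon>)))"
    unfolding X_def
    by (intro continuous_on_norm continuous_on_subset[OF continuous_on_snd_resolvent[OF assms(1)]]) auto
  show ?thesis
  proof (cases "norm (snd (X 1)) \<le> R")
    case True
    then have "(fst (X 1) + 0 *\<^sub>R snd (X 1), snd (X 1)) \<in> truncation G R"
      using X(1) by (intro truncation_memI) auto
    then show ?thesis using X(2)[of 1] by force
  next
    case False
    then obtain \<epsilon> where "1 \<le> \<epsilon>" "\<epsilon> \<le> E" "norm (snd (X \<epsilon>)) = R"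
      using IVT2'[of "\<lambda>\<epsilon>. norm (snd (X \<epsilon>))" E R 1, OF \<open>norm (snd (X E)) \<le> R\<close> _ \<open>1 \<le> E\<close> cont]
      by auto
    then have "(fst (X \<epsilon>) + (\<epsilon> - 1) *\<^sub>R snd (X \<epsilon>), snd (X \<epsilon>)) \<in> truncation G R"
      using X(1) by (intro truncation_memI) auto
    moreover have "fst (X \<epsilon>) + (\<epsilon> - 1) *\<^sub>R snd (X \<epsilon>) + snd (X \<epsilon>) = z"
      using X(2)[OF \<open>1 \<le> \<epsilon>\<close>] by (simp add: algebra_simps)
    ultimately show ?thesis by force
  qed
qed

lemma maximal_S_monotone_truncation:
  assumes "maximal_S_monotone G" "x1 \<in> G" "norm (snd x1) < R"
  shows "maximal_S_monotone (truncation G R)"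
  using S_monotone_truncation[OF maximal_S_monotone_imp_S_monotone[OF assms(1)]] truncation_surj[OF assms]
  by (rule maximal_S_monotoneI_surj)

lemma dom_truncation:
  assumes "maximal_S_monotone G" "x1 \<in> G" "norm (snd x1) < R"
  shows "{u. \<exists>v. (u, v) \<in> truncation G R} = UNIV"
  using ex_mem_if_resolvent_bounded[OF maximal_S_monotone_truncation[OF assms] _]
    norm_snd_le_if_mem_truncation resolvent_mem[OF maximal_S_monotone_truncation[OF assms]]
  by blast

section \<open>The expected gap\<close>

lemma e2ennreal_add_ennreal_uminus:
  fixes f :: ereal and h :: real
  assumes "ereal h \<le> f"
  shows "e2ennreal f + ennreal (- h) = e2ennreal (f - ereal h) + ennreal h + e2ennreal (- f)"
proof (cases f)
  case (real a)
  then have "h \<le> a" using assms by simp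
  then have "ennreal a + ennreal (- h) = ennreal (a - h) + ennreal h + ennreal (- a)"
  proof (cases "0 \<le> a")
    case True
    then show ?thesis using \<open>h \<le> a\<close>
      by (cases "0 \<le> h") (simp_all add: ennreal_neg ennreal_plus[symmetric] del: ennreal_plus)
  next
    case False
    then show ?thesis using \<open>h \<le> a\<close>
      by (simp add: ennreal_neg ennreal_plus[symmetric] del: ennreal_plus)
  qed
  then show ?thesis using real by simp
qed (use assms in simp_all)

lemma nn_integral_e2ennreal_split:
  fixes f :: "'s \<Rightarrow> ereal" and h :: "'s \<Rightarrow> real"
  assumes "f \<in> borel_measurable M" "h \<in> borel_measurable M" "\<And>w. ereal (h w) \<le> f w"
  shows "(\<integral>\<^sup>+ w. e2ennreal (f w) \<partial>M) + (\<integral>\<^sup>+ w. ennreal (- h w) \<partial>M)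
       = (\<integral>\<^sup>+ w. e2ennreal (f w - ereal (h w)) \<partial>M) + (\<integral>\<^sup>+ w. ennreal (h w) \<partial>M)
         + (\<integral>\<^sup>+ w. e2ennreal (- f w) \<partial>M)"
proof -
  have "(\<integral>\<^sup>+ w. e2ennreal (f w) \<partial>M) + (\<integral>\<^sup>+ w. ennreal (- h w) \<partial>M)
      = (\<integral>\<^sup>+ w. e2ennreal (f w) + ennreal (- h w) \<partial>M)"
    using assms(1,2) by (intro nn_integral_add[symmetric]) auto
  also have "\<dots> = (\<integral>\<^sup>+ w. e2ennreal (f w - ereal (h w)) + ennreal (h w) + e2ennreal (- f w) \<partial>M)"
    using e2ennreal_add_ennreal_uminus[OF assms(3)] by simp
  also have "\<dots> = (\<integral>\<^sup>+ w. e2ennreal (f w - ereal (h w)) + ennreal (h w) \<partial>M) + (\<integral>\<^sup>+ w. e2ennreal (- f w) \<partial>M)"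
    using assms(1,2) by (intro nn_integral_add) auto
  also have "(\<integral>\<^sup>+ w. e2ennreal (f w - ereal (h w)) + ennreal (h w) \<partial>M)
      = (\<integral>\<^sup>+ w. e2ennreal (f w - ereal (h w)) \<partial>M) + (\<integral>\<^sup>+ w. ennreal (h w) \<partial>M)"
    using assms(1,2) by (intro nn_integral_add) auto
  finally show ?thesis .
qed

lemma nn_integral_e2ennreal_uminus_le:
  assumes "\<And>w. ereal (h w) \<le> f w"
  shows "(\<integral>\<^sup>+ w. e2ennreal (- f w) \<partial>M) \<le> (\<integral>\<^sup>+ w. ennreal (- h w) \<partial>M)"
proof (rule nn_integral_mono)
  fix w
  have "- f w \<le> - ereal (h w)" using assms[of w] by (simp only: ereal_minus_le_minus)
  then have "- f w \<le> ereal (- h w)" by simp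
  then show "e2ennreal (- f w) \<le> ennreal (- h w)" using e2ennreal_mono by fastforce
qed

lemma eexpectation_eq_nn_integral_plus_integral:
  fixes f :: "'s \<Rightarrow> ereal" and h :: "'s \<Rightarrow> real"
  assumes "f \<in> borel_measurable M" and "integrable M h" and "\<And>w. ereal (h w) \<le> f w"
  shows "eexpectation M f = enn2ereal (\<integral>\<^sup>+ w. e2ennreal (f w - ereal (h w)) \<partial>M) + ereal (integral\<^sup>L M h)"
proof -
  define A where "A = (\<integral>\<^sup>+ w. e2ennreal (f w) \<partial>M)"
  define B where "B = (\<integral>\<^sup>+ w. e2ennreal (- f w) \<partial>M)"
  define P where "P = (\<integral>\<^sup>+ w. ennreal (h w) \<partial>M)"
  define N where "N = (\<integral>\<^sup>+ w. ennreal (- h w) \<partial>M)"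
  define F where "F = (\<integral>\<^sup>+ w. e2ennreal (f w - ereal (h w)) \<partial>M)"
  have eq: "A + N = F + P + B"
    unfolding A_def B_def P_def N_def F_def
    using assms(1) borel_measurable_integrable[OF assms(2)] assms(3) by (rule nn_integral_e2ennreal_split)
  have "P \<noteq> \<infinity>" "N \<noteq> \<infinity>"
    unfolding P_def N_def using integrableD(2,3)[OF assms(2)] by auto
  moreover have "B \<le> N"
    unfolding B_def N_def using assms(3) by (rule nn_integral_e2ennreal_uminus_le)
  then have "B \<noteq> \<infinity>" using \<open>N \<noteq> \<infinity>\<close> by (auto simp: top_unique)
  ultimately obtain p n b where pnb: "P = ennreal p" "N = ennreal n" "B = ennreal b" "0 \<le> p" "0 \<le> n" "0 \<le> b"
    by (cases P; cases N; cases B) auto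
  have int: "integral\<^sup>L M h = p - n"
    using real_lebesgue_integral_def[OF assms(2)] pnb by (simp add: P_def N_def)
  show ?thesis
  proof (cases F)
    case top
    then have "A = \<infinity>" using eq pnb by (simp add: ennreal_add_eq_top)
    then show ?thesis using top pnb unfolding eexpectation_def A_def[symmetric] B_def[symmetric] F_def[symmetric]
      by simp
  next
    case (real \<phi>)
    then have "A + ennreal n = ennreal (\<phi> + p + b)" using eq pnb by simp
    then obtain a where a: "A = ennreal a" "0 \<le> a" by (cases A) (auto simp: ennreal_add_eq_top)
    then have "a + n = \<phi> + p + b"
      using eq pnb real by (simp flip: ennreal_plus add: ennreal_inj)
    then show ?thesis
      unfolding eexpectation_def A_def[symmetric] B_def[symmetric] F_def[symmetric] int
      using a pnb real by simp
  qed
qed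

lemma eexpectation_mono_AE:
  assumes "AE w in M. f w \<le> g w"
  shows "eexpectation M f \<le> eexpectation M g"
proof -
  have "(\<integral>\<^sup>+ w. e2ennreal (f w) \<partial>M) \<le> (\<integral>\<^sup>+ w. e2ennreal (g w) \<partial>M)"
    by (rule nn_integral_mono_AE) (use assms in \<open>auto elim!: eventually_mono intro: e2ennreal_mono\<close>)
  moreover have "(\<integral>\<^sup>+ w. e2ennreal (- g w) \<partial>M) \<le> (\<integral>\<^sup>+ w. e2ennreal (- f w) \<partial>M)"
    by (rule nn_integral_mono_AE) (use assms in \<open>auto elim!: eventually_mono intro: e2ennreal_mono\<close>)
  ultimately show ?thesis unfolding eexpectation_def
    by (intro ereal_minus_mono) (auto simp: less_eq_ennreal.rep_eq[symmetric])
qed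

definition psi_gap :: "'s measure \<Rightarrow> ('s \<Rightarrow> 'a::euclidean_space) \<Rightarrow> ('s \<Rightarrow> 'a) \<Rightarrow> ('a \<times> 'a) set \<Rightarrow> ennreal" where
  "psi_gap M U V G = (\<integral>\<^sup>+ w. e2ennreal (psi G (U w, V w) - ereal (inner (U w) (V w))) \<partial>M)"

lemma integrable_inner:
  fixes U V :: "'s \<Rightarrow> 'a::euclidean_space"
  assumes "U \<in> borel_measurable M" "V \<in> borel_measurable M"
    and "integrable M (\<lambda>w. (norm (U w))\<^sup>2)" "integrable M (\<lambda>w. (norm (V w))\<^sup>2)"
  shows "integrable M (\<lambda>w. inner (U w) (V w))"
proof (rule Bochner_Integration.integrable_bound)
  show "integrable M (\<lambda>w. (norm (U w))\<^sup>2 + (norm (V w))\<^sup>2)"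
    using assms(3,4) by (rule Bochner_Integration.integrable_add)
  show "(\<lambda>w. inner (U w) (V w)) \<in> borel_measurable M"
    using assms(1,2) by (rule borel_measurable_inner)
  show "AE w in M. norm (inner (U w) (V w)) \<le> norm ((norm (U w))\<^sup>2 + (norm (V w))\<^sup>2)"
  proof (intro AE_I2)
    fix w
    have "\<bar>inner (U w) (V w)\<bar> \<le> norm (U w) * norm (V w)" by (rule Cauchy_Schwarz_ineq2)
    also have "\<dots> \<le> (norm (U w))\<^sup>2 + (norm (V w))\<^sup>2"
    proof -
      have "0 \<le> norm (U w) * norm (V w)" by simp
      then show ?thesis
        using sum_squares_bound[of "norm (U w)" "norm (V w)"] unfolding power2_eq_square by linarith
    qed
    finally show "norm (inner (U w) (V w)) \<le> norm ((norm (U w))\<^sup>2 + (norm (V w))\<^sup>2)" by simp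
  qed
qed

lemma eexpectation_psi_eq_psi_gap:
  fixes U V :: "'s \<Rightarrow> 'a::euclidean_space"
  assumes "U \<in> borel_measurable M" "V \<in> borel_measurable M"
    and "integrable M (\<lambda>w. (norm (U w))\<^sup>2)" "integrable M (\<lambda>w. (norm (V w))\<^sup>2)"
    and "maximal_S_monotone G"
  shows "eexpectation M (\<lambda>w. psi G (U w, V w)) = enn2ereal (psi_gap M U V G) + ereal (\<integral>w. inner (U w) (V w) \<partial>M)"
  unfolding psi_gap_def
  by (rule eexpectation_eq_nn_integral_plus_integral[OF borel_measurable_psi_Pair[OF assms(1,2)]
        integrable_inner[OF assms(1-4)] inner_le_psi[OF assms(5)]])

lemma dual_optimal_if_psi_gap_minimal:
  fixes U V :: "'s \<Rightarrow> 'a::euclidean_space"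
  assumes "U \<in> borel_measurable M" "V \<in> borel_measurable M"
    and "integrable M (\<lambda>w. (norm (U w))\<^sup>2)" "integrable M (\<lambda>w. (norm (V w))\<^sup>2)"
    and "maximal_S_monotone G"
    and "\<And>H. maximal_S_monotone H \<Longrightarrow> psi_gap M U V G \<le> psi_gap M U V H"
  shows "dual_optimal M U V G"
  unfolding dual_optimal_def
proof (intro conjI assms(5) allI impI)
  fix H :: "('a \<times> 'a) set" assume H: "maximal_S_monotone H"
  show "eexpectation M (\<lambda>w. psi G (U w, V w)) \<le> eexpectation M (\<lambda>w. psi H (U w, V w))"
    unfolding eexpectation_psi_eq_psi_gap[OF assms(1-5)] eexpectation_psi_eq_psi_gap[OF assms(1-4) H]
    using assms(6)[OF H] by (intro add_right_mono) (simp add: less_eq_ennreal.rep_eq[symmetric])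
qed

section \<open>Existence of an optimal set\<close>

lemma ex_subseq_convergent_on_countable:
  fixes f :: "nat \<Rightarrow> 'a \<Rightarrow> 'b::euclidean_space" and d :: "nat \<Rightarrow> 'a"
  assumes "\<And>n p. norm (f n p) \<le> B p"
  shows "\<exists>\<sigma>. strict_mono \<sigma> \<and> (\<forall>k. convergent (\<lambda>n. f (\<sigma> n) (d k)))"
proof -
  interpret S: subseqs "\<lambda>k s. convergent (\<lambda>n. f (s n) (d k))"
  proof
    fix k and s :: "nat \<Rightarrow> nat"
    have "\<forall>n. f (s n) (d k) \<in> cball 0 (B (d k))" using assms by simp
    then obtain l r where "strict_mono r" "((\<lambda>n. f (s n) (d k)) \<circ> r) \<longlonglongrightarrow> l"
      using seq_compactE[OF compact_imp_seq_compact[OF compact_cball]] by metis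
    then show "\<exists>r'. strict_mono r' \<and> convergent (\<lambda>n. f ((s \<circ> r') n) (d k))"
      by (auto simp: convergent_def o_def)
  qed
  have "convergent (\<lambda>n. f (S.diagseq n) (d k))" for k
  proof -
    have "convergent (\<lambda>n. f ((S.diagseq \<circ> (+) (Suc k)) n) (d k))"
    proof (rule S.diagseq_holds)
      fix r s n assume "strict_mono (r :: nat \<Rightarrow> nat)" "convergent (\<lambda>m. f (s m) (d n))"
      from convergent_subseq_convergent[OF this(2) this(1)]
      show "convergent (\<lambda>m. f ((s \<circ> r) m) (d n))" by (simp add: o_def)
    qed
    then obtain L where "(\<lambda>n. f (S.diagseq (n + Suc k)) (d k)) \<longlonglongrightarrow> L"
      by (auto simp: convergent_def o_def add.commute)
    then have "(\<lambda>n. f (S.diagseq n) (d k)) \<longlonglongrightarrow> L" by (rule LIMSEQ_offset)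
    then show ?thesis by (auto simp: convergent_def)
  qed
  then show ?thesis using S.subseq_diagseq by blast
qed

lemma convergent_if_nonexpansive_convergent_on_dense:
  fixes f :: "nat \<Rightarrow> 'a::metric_space \<Rightarrow> 'b::complete_space" and d :: "nat \<Rightarrow> 'a"
  assumes "\<And>n p p'. dist (f n p) (f n p') \<le> dist p p'"
    and "\<And>k. convergent (\<lambda>n. f n (d k))"
    and "\<And>p e. 0 < e \<Longrightarrow> \<exists>k. dist p (d k) < e"
  shows "convergent (\<lambda>n. f n p)"
proof (rule Cauchy_convergent, rule metric_CauchyI)
  fix e :: real assume "0 < e"
  then have "0 < e / 3" by simp
  then obtain k where k: "dist p (d k) < e / 3" using assms(3) by blast
  obtain N where N: "\<And>m n. N \<le> m \<Longrightarrow> N \<le> n \<Longrightarrow> dist (f m (d k)) (f n (d k)) < e / 3"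
    using metric_CauchyD[OF convergent_Cauchy[OF assms(2)] \<open>0 < e / 3\<close>] by blast
  have "dist (f m p) (f n p) < e" if "N \<le> m" "N \<le> n" for m n
  proof -
    have "dist (f m p) (f n p) \<le> dist (f m p) (f m (d k)) + dist (f m (d k)) (f n (d k)) + dist (f n (d k)) (f n p)"
      using dist_triangle[of "f m p" "f n p" "f n (d k)"] dist_triangle[of "f m p" "f n (d k)" "f m (d k)"]
      by linarith
    also have "\<dots> < e / 3 + e / 3 + e / 3"
      using assms(1)[of m p "d k"] assms(1)[of n "d k" p] N[OF that] k by (simp add: dist_commute)
    finally show ?thesis by simp
  qed
  then show "\<exists>M. \<forall>m\<ge>M. \<forall>n\<ge>M. dist (f m p) (f n p) < e" by blast
qed

lemma ex_subseq_pointwise_convergent: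
  fixes f :: "nat \<Rightarrow> 'a::euclidean_space \<Rightarrow> 'b::euclidean_space"
  assumes "\<And>n p p'. norm (f n p - f n p') \<le> norm (p - p')" and "\<And>n. norm (f n 0) \<le> B"
  shows "\<exists>\<sigma> g. strict_mono \<sigma> \<and> (\<forall>p. (\<lambda>n. f (\<sigma> n) p) \<longlonglongrightarrow> g p)"
proof -
  obtain D :: "'a set" where D: "countable D" "\<And>X. open X \<Longrightarrow> X \<noteq> {} \<Longrightarrow> \<exists>d\<in>D. d \<in> X"
    using countable_dense_setE by blast
  have "D \<noteq> {}" using D(2)[of UNIV] by auto
  define d where "d = from_nat_into D"
  have dense: "\<exists>k. dist p (d k) < e" if "0 < e" for p e
  proof -
    have "\<exists>q\<in>D. q \<in> ball p e" using D(2)[of "ball p e"] that by simp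
    then obtain q where "q \<in> D" "q \<in> ball p e" by blast
    moreover have "range d = D" unfolding d_def using \<open>D \<noteq> {}\<close> D(1) by simp
    ultimately show ?thesis by auto
  qed
  have bound: "norm (f n p) \<le> B + norm p" for n p
    using norm_triangle_ineq[of "f n p - f n 0" "f n 0"] assms(1)[of n p 0] assms(2)[of n] by simp
  obtain \<sigma> where \<sigma>: "strict_mono \<sigma>" "\<And>k. convergent (\<lambda>n. f (\<sigma> n) (d k))"
    using ex_subseq_convergent_on_countable[of f "\<lambda>p. B + norm p" d, OF bound] by blast
  have "convergent (\<lambda>n. f (\<sigma> n) p)" for p
  proof (rule convergent_if_nonexpansive_convergent_on_dense[where f = "\<lambda>n. f (\<sigma> n)" and d = d])
    show "dist (f (\<sigma> n) q) (f (\<sigma> n) q') \<le> dist q q'" for n q q'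
      using assms(1) by (simp add: dist_norm)
    show "convergent (\<lambda>n. f (\<sigma> n) (d k))" for k by (rule \<sigma>(2))
    show "\<exists>k. dist q (d k) < e" if "0 < e" for q e using dense that .
  qed
  then have "(\<lambda>n. f (\<sigma> n) p) \<longlonglongrightarrow> lim (\<lambda>n. f (\<sigma> n) p)" for p
    by (simp add: convergent_LIMSEQ_iff)
  then show ?thesis
    using \<sigma>(1) by (intro exI[of _ \<sigma>] exI[of _ "\<lambda>p. lim (\<lambda>n. f (\<sigma> n) p)"]) simp
qed

lemma maximal_S_monotone_limit:
  assumes "\<And>n. maximal_S_monotone (Gs n)" and "\<And>p. (\<lambda>n. resolvent (Gs n) 1 p) \<longlonglongrightarrow> g p"
  shows "maximal_S_monotone (range g)"
proof (rule maximal_S_monotoneI_surj)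
  show "S_monotone (range g)"
    unfolding S_monotone_iff
  proof (intro ballI)
    fix y1 y2 assume "y1 \<in> range g" "y2 \<in> range g"
    then obtain p1 p2 where y: "y1 = g p1" "y2 = g p2" by auto
    have "(\<lambda>n. inner (fst (resolvent (Gs n) 1 p1) - fst (resolvent (Gs n) 1 p2))
        (snd (resolvent (Gs n) 1 p1) - snd (resolvent (Gs n) 1 p2)))
        \<longlonglongrightarrow> inner (fst y1 - fst y2) (snd y1 - snd y2)"
      unfolding y using assms(2)[of p1] assms(2)[of p2] by (intro tendsto_intros)
    moreover have "0 \<le> inner (fst (resolvent (Gs n) 1 p1) - fst (resolvent (Gs n) 1 p2))
        (snd (resolvent (Gs n) 1 p1) - snd (resolvent (Gs n) 1 p2))" for n
      using S_monotoneD[OF maximal_S_monotone_imp_S_monotone[OF assms(1)]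
          resolvent_mem[OF assms(1) zero_less_one] resolvent_mem[OF assms(1) zero_less_one]] .
    ultimately show "0 \<le> inner (fst y1 - fst y2) (snd y1 - snd y2)"
      using LIMSEQ_le_const by blast
  qed
  fix z
  have "(\<lambda>n. fst (resolvent (Gs n) 1 z) + snd (resolvent (Gs n) 1 z)) \<longlonglongrightarrow> fst (g z) + snd (g z)"
    using assms(2)[of z] by (intro tendsto_intros)
  moreover have "(\<lambda>n. fst (resolvent (Gs n) 1 z) + snd (resolvent (Gs n) 1 z)) = (\<lambda>n. z)"
    using resolvent_eq[OF assms(1) zero_less_one] by simp
  ultimately have "fst (g z) + snd (g z) = z" using LIMSEQ_unique[OF _ tendsto_const] by simp
  then show "\<exists>x\<in>range g. fst x + snd x = z" by blast
qed

lemma e2ennreal_less_iff: "c < e2ennreal z \<longleftrightarrow> enn2ereal c < z"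
proof (cases "0 \<le> z")
  case True
  then show ?thesis using enn2ereal_e2ennreal[OF True] by (metis less_ennreal.rep_eq)
next
  case False
  then have "e2ennreal z = 0" by (simp add: e2ennreal_neg)
  moreover have "\<not> enn2ereal c < z"
    using False enn2ereal_nonneg[of c] by (meson le_less_trans less_imp_le)
  ultimately show ?thesis by simp
qed

lemma psi_minus_le_liminf_limit:
  assumes "\<And>n. maximal_S_monotone (Gs n)" and "\<And>p. (\<lambda>n. resolvent (Gs n) 1 p) \<longlonglongrightarrow> g p"
  shows "e2ennreal (psi (range g) y - ereal h) \<le> liminf (\<lambda>n. e2ennreal (psi (Gs n) y - ereal h))"
  unfolding le_Liminf_iff
proof (intro allI impI)
  fix c assume "c < e2ennreal (psi (range g) y - ereal h)"
  then have "enn2ereal c + ereal h < psi (range g) y"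
    by (simp add: e2ennreal_less_iff ereal_less_minus_iff)
  then obtain p where p: "enn2ereal c + ereal h < ereal (psi_term (g p) y)"
    unfolding psi_SUP_psi_term by (auto simp: less_SUP_iff)
  have "(\<lambda>n. ereal (psi_term (resolvent (Gs n) 1 p) y)) \<longlonglongrightarrow> ereal (psi_term (g p) y)"
    unfolding psi_term_def Sform_def using assms(2)[of p] by (intro tendsto_intros) simp_all
  from order_tendstoD(1)[OF this p]
  show "\<forall>\<^sub>F n in sequentially. c < e2ennreal (psi (Gs n) y - ereal h)"
  proof (rule eventually_mono)
    fix n assume "enn2ereal c + ereal h < ereal (psi_term (resolvent (Gs n) 1 p) y)"
    also have "\<dots> \<le> psi (Gs n) y"
      by (rule psi_term_le_psi[OF resolvent_mem[OF assms(1) zero_less_one]])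
    finally show "c < e2ennreal (psi (Gs n) y - ereal h)"
      by (simp add: e2ennreal_less_iff ereal_less_minus_iff)
  qed
qed

lemma psi_gap_limit_le_liminf:
  fixes U V :: "'s \<Rightarrow> 'a::euclidean_space"
  assumes "U \<in> borel_measurable M" "V \<in> borel_measurable M"
    and "\<And>n. maximal_S_monotone (Gs n)" and "\<And>p. (\<lambda>n. resolvent (Gs n) 1 p) \<longlonglongrightarrow> g p"
  shows "psi_gap M U V (range g) \<le> liminf (\<lambda>n. psi_gap M U V (Gs n))"
proof -
  have meas: "(\<lambda>w. e2ennreal (psi (Gs n) (U w, V w) - ereal (inner (U w) (V w)))) \<in> borel_measurable M" for n
    using borel_measurable_psi_Pair[OF assms(1,2)] borel_measurable_inner[OF assms(1,2)] by measurable
  have "psi_gap M U V (range g)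
      \<le> (\<integral>\<^sup>+ w. liminf (\<lambda>n. e2ennreal (psi (Gs n) (U w, V w) - ereal (inner (U w) (V w)))) \<partial>M)"
    unfolding psi_gap_def using psi_minus_le_liminf_limit[OF assms(3,4)] by (rule nn_integral_mono)
  also have "\<dots> \<le> liminf (\<lambda>n. psi_gap M U V (Gs n))"
    unfolding psi_gap_def using meas by (rule nn_integral_liminf)
  finally show ?thesis .
qed

lemma psi_minus_inner_ge_if_resolvent_far:
  assumes "maximal_S_monotone G" "norm u \<le> k" "norm v \<le> k" "0 \<le> d"
    and "d + 4 * k \<le> norm (resolvent G 1 0)"
  shows "ereal (d\<^sup>2 / 2) \<le> psi G (u, v) - ereal (inner u v)"
proof -
  define x where "x = resolvent G 1 (u + v)"
  have "norm (resolvent G 1 0) \<le> norm (x - (u, v)) + norm (x - resolvent G 1 0) + norm (u, v)"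
    using norm_triangle_ineq4[of x "x - resolvent G 1 0"] norm_triangle_ineq[of "x - (u, v)" "(u, v)"]
    by simp
  moreover have "norm (x - resolvent G 1 0) \<le> norm (u + v)"
    unfolding x_def using resolvent_nonexpansive[OF assms(1), of "u + v" 0] by simp
  moreover have "norm (u + v) \<le> 2 * k" "norm (u, v) \<le> 2 * k"
    using assms(2,3) norm_triangle_ineq[of u v] norm_Pair_le[of u v] by linarith+
  ultimately have "d \<le> norm (x - (u, v))" using assms(5) by linarith
  then have "d\<^sup>2 / 2 \<le> (norm (x - (u, v)))\<^sup>2 / 2" using assms(4) by (simp add: power_mono)
  then have "ereal (d\<^sup>2 / 2) \<le> ereal ((norm (x - (u, v)))\<^sup>2 / 2)" by simp
  also have "\<dots> \<le> psi G (u, v) - ereal (inner u v)"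
    unfolding x_def by (rule psi_minus_inner_ge_resolvent[OF assms(1)])
  finally show ?thesis .
qed

text \<open>On a set of positive measure where \<open>U\<close> and \<open>V\<close> are bounded, a far-off resolvent would make
  the gap large; so a bound on the gap bounds \<open>resolvent G 1 0\<close>.\<close>

lemma norm_resolvent_zero_le:
  assumes "maximal_S_monotone G" "psi_gap M U V G \<le> ennreal K" "0 \<le> K"
    and "A \<in> sets M" "emeasure M A = ennreal \<mu>" "0 < \<mu>"
    and "\<And>w. w \<in> A \<Longrightarrow> norm (U w) \<le> k \<and> norm (V w) \<le> k"
  shows "norm (resolvent G 1 0) \<le> 4 * k + 2 * K / \<mu> + 1"
proof (rule ccontr)
  define d where "d = norm (resolvent G 1 0) - 4 * k"
  assume "\<not> ?thesis"
  then have "2 * K / \<mu> + 1 < d" by (simp add: d_def)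
  moreover have "0 \<le> 2 * K / \<mu>" using assms(3,6) by simp
  ultimately have "1 \<le> d" by linarith
  have pointwise: "ennreal (d\<^sup>2 / 2) * indicator A w \<le> e2ennreal (psi G (U w, V w) - ereal (inner (U w) (V w)))" for w
  proof (cases "w \<in> A")
    case True
    then have "norm (U w) \<le> k" "norm (V w) \<le> k" using assms(7) by auto
    then have "ereal (d\<^sup>2 / 2) \<le> psi G (U w, V w) - ereal (inner (U w) (V w))"
      using \<open>1 \<le> d\<close> by (intro psi_minus_inner_ge_if_resolvent_far[OF assms(1), where k = k]) (auto simp: d_def)
    then show ?thesis using True e2ennreal_mono by fastforce
  qed simp
  have "ennreal (d\<^sup>2 / 2 * \<mu>) = ennreal (d\<^sup>2 / 2) * emeasure M A"
    unfolding assms(5) by (rule ennreal_mult) (use assms(6) in auto)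
  also have "\<dots> \<le> psi_gap M U V G"
    unfolding psi_gap_def using assms(4) pointwise
    by (simp add: nn_integral_cmult_indicator[symmetric] nn_integral_mono)
  also have "\<dots> \<le> ennreal K" by (rule assms(2))
  finally have "ennreal (d\<^sup>2 / 2 * \<mu>) \<le> ennreal K" .
  then have "d\<^sup>2 / 2 * \<mu> \<le> K" using assms(3) by simp
  moreover have "d / 2 * \<mu> \<le> d\<^sup>2 / 2 * \<mu>"
    using \<open>1 \<le> d\<close> assms(6) by (intro mult_right_mono) (auto simp: power2_eq_square)
  moreover have "K < d / 2 * \<mu>"
    using \<open>2 * K / \<mu> + 1 < d\<close> assms(6) by (simp add: field_simps)
  ultimately show False by linarith
qed

lemma ex_bounded_set_pos_measure:
  fixes U V :: "'s \<Rightarrow> 'a::euclidean_space"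
  assumes "prob_space M" and [measurable]: "U \<in> borel_measurable M" "V \<in> borel_measurable M"
  obtains k :: nat where "0 < emeasure M {w \<in> space M. norm (U w) \<le> k \<and> norm (V w) \<le> k}"
proof (rule ccontr)
  define A where "A k = {w \<in> space M. norm (U w) \<le> real k \<and> norm (V w) \<le> real k}" for k :: nat
  assume "\<not> thesis"
  have "A k \<in> sets M" for k unfolding A_def by measurable
  moreover have "emeasure M (A k) = 0" for k
    using that \<open>\<not> thesis\<close> unfolding A_def by (meson not_gr_zero)
  ultimately have "A k \<in> null_sets M" for k by auto
  then have "(\<Union>k. A k) \<in> null_sets M" by auto
  moreover have "(\<Union>k. A k) = space M"
  proof
    show "(\<Union>k. A k) \<subseteq> space M" unfolding A_def by auto
    show "space M \<subseteq> (\<Union>k. A k)"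
    proof
      fix w assume "w \<in> space M"
      obtain k :: nat where "max (norm (U w)) (norm (V w)) \<le> real k" using real_arch_simple by blast
      then show "w \<in> (\<Union>k. A k)" using \<open>w \<in> space M\<close> unfolding A_def by auto
    qed
  qed
  ultimately have "emeasure M (space M) = 0" by auto
  then show False using prob_space.emeasure_space_1[OF assms(1)] by simp
qed

lemma ex_convergent_resolvents_if_psi_gap_bounded:
  fixes U V :: "'s \<Rightarrow> 'a::euclidean_space" and Gs :: "nat \<Rightarrow> ('a \<times> 'a) set"
  assumes "prob_space M" "U \<in> borel_measurable M" "V \<in> borel_measurable M"
    and "\<And>n. maximal_S_monotone (Gs n)" and "\<And>n. psi_gap M U V (Gs n) \<le> ennreal K" and "0 \<le> K"
  shows "\<exists>\<sigma> g. strict_mono \<sigma> \<and> (\<forall>p. (\<lambda>n. resolvent (Gs (\<sigma> n)) 1 p) \<longlonglongrightarrow> g p)"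
proof -
  interpret prob_space M by (rule assms(1))
  obtain k :: nat where k: "0 < emeasure M {w \<in> space M. norm (U w) \<le> k \<and> norm (V w) \<le> k}"
    using ex_bounded_set_pos_measure[OF assms(1-3)] by blast
  define A where "A = {w \<in> space M. norm (U w) \<le> k \<and> norm (V w) \<le> k}"
  have "A \<in> sets M" unfolding A_def using assms(2,3) by measurable
  have "0 < measure M A" using k by (simp add: A_def emeasure_eq_measure)
  have "norm (resolvent (Gs n) 1 0) \<le> 4 * real k + 2 * K / measure M A + 1" for n
    by (rule norm_resolvent_zero_le[OF assms(4,5,6) \<open>A \<in> sets M\<close> emeasure_eq_measure
          \<open>0 < measure M A\<close>]) (auto simp: A_def)
  then show ?thesis
    by (rule ex_subseq_pointwise_convergent[of "\<lambda>n. resolvent (Gs n) 1", OF resolvent_nonexpansive[OF assms(4)]])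
qed

lemma liminf_subseq_le_if_less_add_inverse:
  fixes x :: "nat \<Rightarrow> ennreal"
  assumes "\<And>n. x n < m + ennreal (1 / (real n + 1))" and "strict_mono \<sigma>"
  shows "liminf (\<lambda>n. x (\<sigma> n)) \<le> m"
proof -
  have "liminf (\<lambda>n. x (\<sigma> n)) \<le> liminf (\<lambda>n. m + ennreal (1 / (real n + 1)))"
  proof (intro Liminf_mono always_eventually allI)
    fix n
    have "ennreal (1 / (real (\<sigma> n) + 1)) \<le> ennreal (1 / (real n + 1))"
      using seq_suble[OF assms(2), of n] by (intro ennreal_leI) (simp add: divide_simps)
    then show "x (\<sigma> n) \<le> m + ennreal (1 / (real n + 1))"
      by (rule order.trans[OF less_imp_le[OF assms(1)] add_left_mono])
  qed
  also have "\<dots> = m"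
  proof (rule lim_imp_Liminf)
    have "(\<lambda>n. 1 / (real n + 1)) \<longlonglongrightarrow> 0"
      using LIMSEQ_inverse_real_of_nat_add[of 0] by (simp add: inverse_eq_divide add.commute)
    then have "(\<lambda>n. ennreal (1 / (real n + 1))) \<longlonglongrightarrow> ennreal 0" by (rule tendsto_ennrealI)
    then have "(\<lambda>n. m + ennreal (1 / (real n + 1))) \<longlonglongrightarrow> m + 0" by (intro tendsto_add tendsto_const) simp
    then show "(\<lambda>n. m + ennreal (1 / (real n + 1))) \<longlonglongrightarrow> m" by simp
  qed simp
  finally show ?thesis .
qed

theorem ex_dual_optimal:
  fixes U V :: "'s \<Rightarrow> 'a::euclidean_space"
  assumes "prob_space M" "U \<in> borel_measurable M" "V \<in> borel_measurable M"
    and "integrable M (\<lambda>w. (norm (U w))\<^sup>2)" "integrable M (\<lambda>w. (norm (V w))\<^sup>2)"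
  shows "\<exists>G. dual_optimal M U V G"
proof -
  define m where "m = (INF H\<in>{H. maximal_S_monotone H}. psi_gap M U V H)"
  have "psi_gap M U V Id \<noteq> \<infinity>"
    using eexpectation_psi_Id_less_top[OF assms(4,5)]
    unfolding eexpectation_psi_eq_psi_gap[OF assms(2-5) maximal_S_monotone_Id] by auto
  then obtain K where K: "psi_gap M U V Id = ennreal K" "0 \<le> K" by (cases "psi_gap M U V Id") auto
  have "m \<le> ennreal K"
    unfolding m_def K(1)[symmetric] using maximal_S_monotone_Id by (auto intro: INF_lower)
  have "\<exists>H. maximal_S_monotone H \<and> psi_gap M U V H < m + ennreal (1 / (real n + 1))" for n
  proof -
    have "m + 0 < m + ennreal (1 / (real n + 1))"
      using \<open>m \<le> ennreal K\<close> by (subst ennreal_add_left_cancel_less) (auto simp: top_unique)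
    then show ?thesis unfolding m_def by (auto simp: INF_less_iff)
  qed
  then obtain Gs where Gs: "\<And>n. maximal_S_monotone (Gs n)"
    "\<And>n. psi_gap M U V (Gs n) < m + ennreal (1 / (real n + 1))"
    by metis
  have "psi_gap M U V (Gs n) \<le> ennreal (K + 1)" for n
  proof -
    have "ennreal (1 / (real n + 1)) \<le> ennreal 1" by (intro ennreal_leI) (simp add: field_simps)
    then have "psi_gap M U V (Gs n) \<le> m + ennreal 1"
      using Gs(2)[of n] by (meson add_left_mono less_imp_le order_trans)
    also have "\<dots> \<le> ennreal K + ennreal 1" using \<open>m \<le> ennreal K\<close> by (rule add_right_mono)
    also have "\<dots> = ennreal (K + 1)" using K(2) by simp
    finally show ?thesis .
  qed
  from ex_convergent_resolvents_if_psi_gap_bounded[where Gs = Gs and K = "K + 1", OF assms(1-3) Gs(1) this]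
  obtain \<sigma> g where \<sigma>: "strict_mono \<sigma>" "\<And>p. (\<lambda>n. resolvent (Gs (\<sigma> n)) 1 p) \<longlonglongrightarrow> g p"
    using K(2) by auto
  have "psi_gap M U V (range g) \<le> liminf (\<lambda>n. psi_gap M U V (Gs (\<sigma> n)))"
    using assms(2,3) Gs(1) \<sigma>(2) by (rule psi_gap_limit_le_liminf)
  also have "\<dots> \<le> m" using Gs(2) \<sigma>(1) by (rule liminf_subseq_le_if_less_add_inverse)
  finally have "psi_gap M U V (range g) \<le> psi_gap M U V H" if "maximal_S_monotone H" for H
    by (rule order.trans) (simp add: m_def INF_lower that)
  with maximal_S_monotone_limit[OF Gs(1) \<sigma>(2)] have "dual_optimal M U V (range g)"
    by (rule dual_optimal_if_psi_gap_minimal[OF assms(2-5)])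
  then show ?thesis by blast
qed

theorem ex_dual_optimal_dom_UNIV:
  fixes U V :: "'s \<Rightarrow> 'a::euclidean_space"
  assumes "prob_space M" "U \<in> borel_measurable M" "V \<in> borel_measurable M"
    and "integrable M (\<lambda>w. (norm (U w))\<^sup>2)" "integrable M (\<lambda>w. (norm (V w))\<^sup>2)"
    and "AE w in M. norm (V w) \<le> C"
  shows "\<exists>G. dual_optimal M U V G \<and> {u. \<exists>v. (u, v) \<in> G} = UNIV"
proof -
  obtain G where G: "dual_optimal M U V G" using ex_dual_optimal[OF assms(1-5)] by blast
  then have "maximal_S_monotone G" unfolding dual_optimal_def by blast
  then obtain x1 where "x1 \<in> G" using maximal_S_monotone_nonempty by blast
  define R where "R = max C (norm (snd x1) + 1)"
  have "norm (snd x1) < R" by (simp add: R_def)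
  have "AE w in M. psi (truncation G R) (U w, V w) \<le> psi G (U w, V w)"
    using assms(6) by eventually_elim (simp add: R_def psi_truncation_le)
  then have "eexpectation M (\<lambda>w. psi (truncation G R) (U w, V w)) \<le> eexpectation M (\<lambda>w. psi G (U w, V w))"
    by (rule eexpectation_mono_AE)
  then have "dual_optimal M U V (truncation G R)"
    using G maximal_S_monotone_truncation[OF \<open>maximal_S_monotone G\<close> \<open>x1 \<in> G\<close> \<open>norm (snd x1) < R\<close>]
    unfolding dual_optimal_def by (blast intro: order_trans)
  then show ?thesis
    using dom_truncation[OF \<open>maximal_S_monotone G\<close> \<open>x1 \<in> G\<close> \<open>norm (snd x1) < R\<close>] by blast
qed

theorem lemma10:
  fixes M :: "'s measure" and U V :: "'s \<Rightarrow> 'a::euclidean_space"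
  assumes "prob_space M"
    and "U \<in> borel_measurable M" and "V \<in> borel_measurable M"
    and "integrable M (\<lambda>w. (norm (U w))\<^sup>2)"
    and "integrable M (\<lambda>w. (norm (V w))\<^sup>2)"
  shows "(convex hull (law_support M U) = UNIV \<longrightarrow>
            (\<forall>G. dual_optimal M U V G \<longrightarrow> {u. \<exists>v. (u, v) \<in> G} = UNIV))
       \<and> ((\<exists>C. AE w in M. norm (V w) \<le> C) \<longrightarrow>
            (\<exists>G. dual_optimal M U V G \<and> {u. \<exists>v. (u, v) \<in> G} = UNIV))"
  using dom_eq_UNIV_if_dual_optimal[OF assms(2-5)] ex_dual_optimal_dom_UNIV[OF assms]
  by blast

end
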